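(* Let $G$ be a finite abelian group with $|G|\ge3$. Then (1) $[1,\mathsf{r}(G)-1]\subset\Delta^{\ast}(G)$; (2) $d-2\in\Delta^{\ast}(G)$ for every $d\ge3$ with $d\mid\exp(G)$; (3) $|n-r-1|\in\Delta^{\ast}(C_n^r)$ for all $n\ge2$, $r\ge1$ with $n\ne r+1$. In particular, $\max\Delta^{\ast}(G)\ge\max\{\mathsf{r}(G)-1,\exp(G)-2\}$.
   Context: For a subset $G_0$ of an abelian group, $\mathcal{B}(G_0)$ is the monoid of zero-sum sequences over $G_0$, with atoms the minimal zero-sum sequences; $\mathsf{L}(B)$ is the set of lengths of factorizations of $B$ into atoms. For $A\subset\mathbb{Z}$, $\Delta(A)$ is the set of $d\in\mathbb{N}$ such that some $l\in A$ has $A\cap[l,l+d]=\{l,l+d\}$, and $\Delta(G_0)=\bigcup_{B\in\mathcal{B}(G_0)}\Delta(\mathsf{L}(B))$. Then $\Delta^{\ast}(G)=\{\min\Delta(G_0): G_0\subset G,\ \Delta(G_0)\ne\emptyset\}$. If $G\cong C_{n_1}\oplus\cdots\oplus C_{n_r}$ with $1<n_1\mid\cdots\mid n_r$, then $\mathsf{r}(G)=r$ and $\exp(G)=n_r$. *)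

theory Defs
  imports Main "HOL-Library.Multiset"
begin

text \<open>The finite abelian group G is the universe of a type of class
  ab_group_add and finite.  Sequences over G are finite multisets.\<close>

definition zss :: "'a::ab_group_add set \<Rightarrow> 'a multiset set" where
  "zss G0 = {B. set_mset B \<subseteq> G0 \<and> sum_mset B = 0}"

definition is_atom :: "'a::ab_group_add set \<Rightarrow> 'a multiset \<Rightarrow> bool" where
  "is_atom G0 A \<longleftrightarrow> A \<in> zss G0 \<and> A \<noteq> {#} \<and>
     (\<forall>C. C \<subseteq># A \<longrightarrow> C \<noteq> {#} \<longrightarrow> sum_mset C = 0 \<longrightarrow> C = A)"

definition lengths :: "'a::ab_group_add set \<Rightarrow> 'a multiset \<Rightarrow> nat set" where
  "lengths G0 B = {size F | F. (\<forall>A\<in>#F. is_atom G0 A) \<and> sum_mset F = B}"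

definition delta_set :: "nat set \<Rightarrow> nat set" where
  "delta_set L = {d. 0 < d \<and> (\<exists>l\<in>L. L \<inter> {l..l+d} = {l, l+d})}"

definition Delta :: "'a::ab_group_add set \<Rightarrow> nat set" where
  "Delta G0 = (\<Union>B\<in>zss G0. delta_set (lengths G0 B))"

definition delta_star :: "'a::ab_group_add itself \<Rightarrow> nat set" where
  "delta_star (_::'a itself) = {Inf (Delta G0) | G0::'a set. Delta G0 \<noteq> {}}"

text \<open>The group C_{n_1} + ... + C_{n_r}, modelled on lists xs with xs!i < ns!i,
  with componentwise addition modulo ns!i.\<close>
definition cyc_carrier :: "nat list \<Rightarrow> nat list set" where
  "cyc_carrier ns = {xs. length xs = length ns \<and> (\<forall>i<length ns. xs ! i < ns ! i)}"

definition cyc_add :: "nat list \<Rightarrow> nat list \<Rightarrow> nat list \<Rightarrow> nat list" where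
  "cyc_add ns xs ys = map (\<lambda>i. (xs ! i + ys ! i) mod (ns ! i)) [0..<length ns]"

definition is_inv_decomp :: "'a::ab_group_add itself \<Rightarrow> nat list \<Rightarrow> bool" where
  "is_inv_decomp (_::'a itself) ns \<longleftrightarrow>
     (\<forall>i<length ns. 1 < ns ! i) \<and>
     (\<forall>i. Suc i < length ns \<longrightarrow> ns ! i dvd ns ! Suc i) \<and>
     (\<exists>f::'a \<Rightarrow> nat list. bij_betw f UNIV (cyc_carrier ns) \<and>
        (\<forall>a b. f (a + b) = cyc_add ns (f a) (f b)))"

definition group_rank :: "'a::ab_group_add itself \<Rightarrow> nat" where
  "group_rank T = (THE r. \<exists>ns. is_inv_decomp T ns \<and> length ns = r)"

definition group_exp :: "'a::ab_group_add itself \<Rightarrow> nat" where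
  "group_exp (_::'a itself) = (LEAST m. 0 < m \<and> (\<forall>g::'a. (\<Sum>_<m. g) = 0))"

end

theory Submission
  imports Defs "HOL-Computational_Algebra.Primes"
begin

text \<open>
  Let v_1, ..., v_k be independent elements of order n and e = -(v_1 + ... + v_k). Over
  G_0 = {e, v_1, ..., v_k} the atoms are e^n, v_i^n and e v_1 ... v_k. An atom's length
  plus n - k - 1 times its multiplicity of e is n modulo n (n - k - 1), so any two
  factorization lengths of a zero-sum sequence are congruent modulo |n - k - 1|, while
  (e v_1 ... v_k)^n = e^n v_1^n ... v_k^n has the lengths n and k + 1. Hence
  min Delta(G_0) = |n - k - 1|. For e = v_1 + ... + v_k the remaining atoms are
  e^j v_1^(n-j) ... v_k^(n-j), and the same weighting gives min Delta(G_0) = k - 1.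

  Such families live inside a basis b_1, ..., b_r of G with orders n_1 | ... | n_r: the
  multiples (n_i / n_1) b_i have order n_1 and give every value in [1, r - 1], and a
  multiple of b_r of order d | exp(G) gives d - 2. The basis is built by splitting off
  cyclic subgroups of maximal order; counting p-torsion shows that its length is the rank.
\<close>

section \<open>Natural multiples and additive order\<close>

primrec smul :: "nat \<Rightarrow> 'a::ab_group_add \<Rightarrow> 'a" where
  "smul 0 g = 0"
| "smul (Suc n) g = g + smul n g"

lemma smul_add_left: "smul (a + b) g = smul a g + smul b g"
  by (induction a) (simp_all add: add.assoc)

lemma smul_mult: "smul (a * b) g = smul a (smul b g)"
  by (induction a) (simp_all add: smul_add_left)

lemma smul_commute: "smul a (smul b g) = smul b (smul a g)"
  by (metis smul_mult mult.commute)

lemma smul_add_right: "smul a (g + h) = smul a g + smul a h"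
  by (induction a) (simp_all add: algebra_simps)

lemma smul_minus_right: "smul a (- g) = - smul a g"
  by (induction a) (simp_all add: algebra_simps)

lemma smul_diff_right: "smul a (g - h) = smul a g - smul a h"
  by (metis diff_conv_add_uminus smul_add_right smul_minus_right)

lemma smul_zero_right [simp]: "smul a 0 = 0"
  by (induction a) simp_all

lemma smul_sum_right: "smul a (\<Sum>i\<in>I. f i) = (\<Sum>i\<in>I. smul a (f i))"
  by (induction I rule: infinite_finite_induct) (simp_all add: smul_add_right)

lemma sum_const_lessThan_eq_smul: "(\<Sum>_<m. g) = smul m g"
  by (induction m) (simp_all add: add.commute)

lemma sum_mset_replicate_mset_eq_smul: "sum_mset (replicate_mset n g) = smul n g"
  by (induction n) simp_all

lemma smul_mod:
  assumes "smul m g = 0"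
  shows "smul (a mod m) g = smul a g"
proof -
  have "smul a g = smul (a div m * m) g + smul (a mod m) g"
    by (simp flip: smul_add_left)
  also have "smul (a div m * m) g = 0"
    by (simp add: smul_mult assms)
  finally show ?thesis by simp
qed

lemma smul_eq_smul_iff_mod:
  assumes "\<And>t. smul t g = 0 \<longleftrightarrow> n dvd t"
  shows "smul a g = smul c g \<longleftrightarrow> a mod n = c mod n"
proof -
  have *: "smul a g = smul c g \<longleftrightarrow> a mod n = c mod n" if "a \<le> c" for a c
  proof -
    have "smul c g = smul a g + smul (c - a) g"
      using that by (simp flip: smul_add_left)
    then have "smul a g = smul c g \<longleftrightarrow> smul (c - a) g = 0"
      by simp
    also have "\<dots> \<longleftrightarrow> n dvd c - a"
      by (rule assms)
    also have "\<dots> \<longleftrightarrow> a mod n = c mod n"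
      using mod_eq_dvd_iff_nat[OF that, of n] by auto
    finally show ?thesis .
  qed
  show ?thesis
  proof (cases "a \<le> c")
    case False
    then show ?thesis using *[of c a] by auto
  qed (rule *)
qed

definition add_ord :: "'a::ab_group_add \<Rightarrow> nat" where
  "add_ord g = (LEAST t. 0 < t \<and> smul t g = 0)"

lemma ex_smul_eq_zero:
  fixes g :: "'a::{ab_group_add,finite}"
  shows "\<exists>t>0. smul t g = 0"
proof -
  have "\<not> inj (\<lambda>t. smul t g)"
  proof
    assume "inj (\<lambda>t. smul t g)"
    then have "infinite (range (\<lambda>t. smul t g))"
      using finite_imageD infinite_UNIV_nat by blast
    then show False by simp
  qed
  then obtain i j where "i \<noteq> j" "smul i g = smul j g"
    unfolding inj_def by blast
  then obtain i j where "i < j" "smul i g = smul j g"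
    by (cases "i < j") (auto simp: neq_iff)
  moreover have "smul j g = smul i g + smul (j - i) g"
    using \<open>i < j\<close> by (simp flip: smul_add_left)
  ultimately show ?thesis
    by (intro exI[of _ "j - i"]) simp
qed

lemma add_ord_pos: "0 < add_ord (g::'a::{ab_group_add,finite})"
  and smul_add_ord [simp]: "smul (add_ord g) g = 0"
  using LeastI_ex[OF ex_smul_eq_zero[of g]] by (simp_all add: add_ord_def)

lemma add_ord_le: "0 < t \<Longrightarrow> smul t g = 0 \<Longrightarrow> add_ord g \<le> t"
  unfolding add_ord_def by (simp add: Least_le)

lemma smul_eq_zero_iff_add_ord_dvd:
  fixes g :: "'a::{ab_group_add,finite}"
  shows "smul t g = 0 \<longleftrightarrow> add_ord g dvd t"
proof
  assume t: "smul t g = 0"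
  have "smul (t mod add_ord g) g = 0"
    using smul_mod[of "add_ord g" g t] t by simp
  then have "\<not> 0 < t mod add_ord g"
    using add_ord_le[of "t mod add_ord g" g] add_ord_pos[of g] by (meson mod_less_divisor not_le)
  then show "add_ord g dvd t" by (simp add: mod_eq_0_iff_dvd)
next
  assume "add_ord g dvd t"
  then show "smul t g = 0"
    by (auto simp: smul_mult mult.commute[of "add_ord g"])
qed

lemma smul_eq_smul_iff_mod_add_ord:
  fixes g :: "'a::{ab_group_add,finite}"
  shows "smul a g = smul c g \<longleftrightarrow> a mod add_ord g = c mod add_ord g"
  by (rule smul_eq_smul_iff_mod) (rule smul_eq_zero_iff_add_ord_dvd)

lemma add_ord_eqI:
  fixes g :: "'a::{ab_group_add,finite}"
  assumes "\<And>t. smul t g = 0 \<longleftrightarrow> n dvd t"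
  shows "add_ord g = n"
proof (rule dvd_antisym)
  show "add_ord g dvd n"
    using assms[of n] by (simp flip: smul_eq_zero_iff_add_ord_dvd)
  show "n dvd add_ord g"
    using assms[of "add_ord g"] by simp
qed

lemma add_ord_smul:
  fixes g :: "'a::{ab_group_add,finite}"
  assumes "c dvd add_ord g" "0 < c"
  shows "add_ord (smul c g) = add_ord g div c"
proof (rule add_ord_eqI)
  fix t
  obtain d where d: "add_ord g = c * d" using assms(1) ..
  have "smul t (smul c g) = 0 \<longleftrightarrow> c * d dvd c * t"
    by (simp add: d smul_eq_zero_iff_add_ord_dvd mult.commute[of c t] flip: smul_mult)
  then show "smul t (smul c g) = 0 \<longleftrightarrow> add_ord g div c dvd t"
    using assms(2) d by simp
qed

lemma add_ord_add_coprime: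
  fixes x y :: "'a::{ab_group_add,finite}"
  assumes "coprime (add_ord x) (add_ord y)"
  shows "add_ord (x + y) = add_ord x * add_ord y"
proof (rule add_ord_eqI)
  fix t
  have dvd_other: "add_ord u dvd t" if "smul t (u + w) = 0" "coprime (add_ord u) (add_ord w)"
    for u w :: 'a
  proof -
    have "smul t u = - smul t w"
      using that(1) by (simp add: smul_add_right eq_neg_iff_add_eq_0)
    then have "smul (add_ord w * t) u = - smul t (smul (add_ord w) w)"
      by (simp only: smul_mult smul_minus_right smul_commute[of t])
    then have "add_ord u dvd add_ord w * t"
      by (simp flip: smul_eq_zero_iff_add_ord_dvd)
    then show ?thesis using that(2) by (simp add: coprime_dvd_mult_right_iff)
  qed
  show "smul t (x + y) = 0 \<longleftrightarrow> add_ord x * add_ord y dvd t"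
  proof
    assume t: "smul t (x + y) = 0"
    then have "smul t (y + x) = 0" by (simp only: add.commute)
    then have "add_ord x dvd t" "add_ord y dvd t"
      using dvd_other[of x y] dvd_other[of y x] t assms by (simp_all add: coprime_commute)
    then show "add_ord x * add_ord y dvd t" using assms by (simp add: divides_mult)
  next
    assume "add_ord x * add_ord y dvd t"
    then have "add_ord x dvd t" "add_ord y dvd t"
      by (auto intro: dvd_mult_left dvd_mult_right)
    then have "smul t x = 0" "smul t y = 0"
      by (simp_all add: smul_eq_zero_iff_add_ord_dvd)
    then show "smul t (x + y) = 0"
      by (simp add: smul_add_right)
  qed
qed

lemma one_less_add_ord_iff: "1 < add_ord g \<longleftrightarrow> g \<noteq> (0::'a::{ab_group_add,finite})"
proof -
  have "add_ord g = 1 \<longleftrightarrow> g = 0"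
  proof
    assume "add_ord g = 1"
    then have "smul 1 g = 0" by (metis smul_add_ord)
    then show "g = 0" by simp
  qed (auto intro: add_ord_eqI)
  then show ?thesis using add_ord_pos[of g] by linarith
qed

section \<open>Independent families\<close>

definition dvd_chain :: "nat list \<Rightarrow> bool" where
  "dvd_chain ns \<longleftrightarrow> (\<forall>i<length ns. 1 < ns ! i) \<and> (\<forall>i. Suc i < length ns \<longrightarrow> ns ! i dvd ns ! Suc i)"

definition indep :: "(nat \<Rightarrow> 'a::ab_group_add) \<Rightarrow> nat list \<Rightarrow> bool" where
  "indep b ns \<longleftrightarrow> (\<forall>a c. (\<Sum>i<length ns. smul (a i) (b i)) = (\<Sum>i<length ns. smul (c i) (b i))
      \<longleftrightarrow> (\<forall>i<length ns. a i mod ns ! i = c i mod ns ! i))"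

definition spans :: "'a::ab_group_add set \<Rightarrow> (nat \<Rightarrow> 'a) \<Rightarrow> nat list \<Rightarrow> bool" where
  "spans H b ns \<longleftrightarrow> (\<forall>x\<in>H. \<exists>a. x = (\<Sum>i<length ns. smul (a i) (b i)))"

lemma indepD:
  "indep b ns \<Longrightarrow> (\<Sum>i<length ns. smul (a i) (b i)) = (\<Sum>i<length ns. smul (c i) (b i))
     \<longleftrightarrow> (\<forall>i<length ns. a i mod ns ! i = c i mod ns ! i)"
  unfolding indep_def by blast

lemma dvd_chain_nth_gt_1: "dvd_chain ns \<Longrightarrow> i < length ns \<Longrightarrow> 1 < ns ! i"
  unfolding dvd_chain_def by blast

lemma dvd_chain_nth_pos: "dvd_chain ns \<Longrightarrow> i < length ns \<Longrightarrow> 0 < ns ! i"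
  using dvd_chain_nth_gt_1 by fastforce

lemma dvd_chain_nth_dvd:
  assumes "dvd_chain ns" "i \<le> j" "j < length ns"
  shows "ns ! i dvd ns ! j"
  using assms(2,3)
proof (induction j)
  case (Suc j)
  show ?case
  proof (cases "i = Suc j")
    case False
    then have "ns ! i dvd ns ! j" using Suc by simp
    moreover have "ns ! j dvd ns ! Suc j" using assms(1) Suc.prems unfolding dvd_chain_def by blast
    ultimately show ?thesis by (rule dvd_trans)
  qed simp
qed simp

lemma sum_smul_indicator:
  assumes "j < (r::nat)"
  shows "(\<Sum>i<r. smul (if i = j then t else 0) (b i)) = smul t (b j)"
proof -
  have "(\<Sum>i<r. smul (if i = j then t else 0) (b i)) = (\<Sum>i<r. if i = j then smul t (b j) else 0)"
    by (rule sum.cong) auto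
  also have "\<dots> = smul t (b j)"
    using assms by (subst sum.delta) auto
  finally show ?thesis .
qed

lemma indep_smul_eq_zero_iff:
  assumes "indep b ns" "j < length ns"
  shows "smul t (b j) = 0 \<longleftrightarrow> ns ! j dvd t"
proof -
  have "smul t (b j) = 0 \<longleftrightarrow>
      (\<Sum>i<length ns. smul (if i = j then t else 0) (b i)) = (\<Sum>i<length ns. smul 0 (b i))"
    using sum_smul_indicator[OF assms(2), of t b] by simp
  also have "\<dots> \<longleftrightarrow> (\<forall>i<length ns. (if i = j then t else 0) mod ns ! i = 0 mod ns ! i)"
    by (rule indepD[OF assms(1)])
  also have "\<dots> \<longleftrightarrow> ns ! j dvd t"
    using assms(2) by (auto simp: mod_eq_0_iff_dvd)
  finally show ?thesis .
qed

lemma indep_scaled: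
  assumes ind: "indep b ns" and "k \<le> length ns"
    and scale: "\<And>i. i < k \<Longrightarrow> ns ! i = n * q i" "\<And>i. i < k \<Longrightarrow> 0 < q i"
  shows "indep (\<lambda>i. smul (q i) (b i)) (replicate k n)"
  unfolding indep_def length_replicate
proof (intro allI)
  fix a c :: "nat \<Rightarrow> nat"
  define pad where "pad a i = (if i < k then a i * q i else 0)" for a :: "nat \<Rightarrow> nat" and i
  have sum_pad: "(\<Sum>i<k. smul (a i) (smul (q i) (b i))) = (\<Sum>i<length ns. smul (pad a i) (b i))"
    for a
  proof -
    have "(\<Sum>i<length ns. smul (pad a i) (b i)) = (\<Sum>i<k. smul (a i * q i) (b i))"
      by (rule sum.mono_neutral_cong_right) (use \<open>k \<le> length ns\<close> in \<open>auto simp: pad_def\<close>)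
    then show ?thesis by (simp add: smul_mult)
  qed
  have pad_mod: "pad a i mod ns ! i = pad c i mod ns ! i \<longleftrightarrow> a i mod n = c i mod n"
    if "i < k" for i
  proof -
    have "pad a i mod ns ! i = pad c i mod ns ! i \<longleftrightarrow> (a i mod n) * q i = (c i mod n) * q i"
      using that scale(1)[OF that] by (simp add: pad_def mult_mod_left)
    then show ?thesis using scale(2)[OF that] by simp
  qed
  have "(\<Sum>i<k. smul (a i) (smul (q i) (b i))) = (\<Sum>i<k. smul (c i) (smul (q i) (b i)))
      \<longleftrightarrow> (\<forall>i<length ns. pad a i mod ns ! i = pad c i mod ns ! i)"
    unfolding sum_pad by (rule indepD[OF ind])
  also have "\<dots> \<longleftrightarrow> (\<forall>i<k. a i mod n = c i mod n)"
    using pad_mod \<open>k \<le> length ns\<close> by (auto simp: pad_def)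
  finally show "(\<Sum>i<k. smul (a i) (smul (q i) (b i))) = (\<Sum>i<k. smul (c i) (smul (q i) (b i)))
      \<longleftrightarrow> (\<forall>i<k. a i mod replicate k n ! i = c i mod replicate k n ! i)"
    by simp
qed

lemma indep_nth:
  assumes "indep b ns" "j < length ns"
  shows "indep (\<lambda>_. b j) [ns ! j]"
  using smul_eq_smul_iff_mod[OF indep_smul_eq_zero_iff[OF assms]] by (simp add: indep_def)

section \<open>Existence of a basis\<close>

definition add_subgroup :: "'a::ab_group_add set \<Rightarrow> bool" where
  "add_subgroup H \<longleftrightarrow> 0 \<in> H \<and> (\<forall>x\<in>H. \<forall>y\<in>H. x + y \<in> H) \<and> (\<forall>x\<in>H. - x \<in> H)"

lemma add_subgroup_zero: "add_subgroup H \<Longrightarrow> 0 \<in> H"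
  and add_subgroup_add: "add_subgroup H \<Longrightarrow> x \<in> H \<Longrightarrow> y \<in> H \<Longrightarrow> x + y \<in> H"
  and add_subgroup_minus: "add_subgroup H \<Longrightarrow> x \<in> H \<Longrightarrow> - x \<in> H"
  unfolding add_subgroup_def by blast+

lemma add_subgroup_diff: "add_subgroup H \<Longrightarrow> x \<in> H \<Longrightarrow> y \<in> H \<Longrightarrow> x - y \<in> H"
  by (metis add_subgroup_add add_subgroup_minus diff_conv_add_uminus)

lemma add_subgroup_smul: "add_subgroup H \<Longrightarrow> x \<in> H \<Longrightarrow> smul t x \<in> H"
  by (induction t) (simp_all add: add_subgroup_zero add_subgroup_add)

lemma add_subgroup_sum: "add_subgroup H \<Longrightarrow> (\<And>i. i \<in> I \<Longrightarrow> f i \<in> H) \<Longrightarrow> sum f I \<in> H"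
  by (induction I rule: infinite_finite_induct) (simp_all add: add_subgroup_zero add_subgroup_add)

lemma minus_smul_eq_smul:
  fixes g :: "'a::{ab_group_add,finite}"
  shows "- smul t g = smul (t * (add_ord g - 1)) g"
proof -
  obtain m where m: "add_ord g = Suc m"
    using add_ord_pos[of g] gr0_implies_Suc by blast
  have "smul t g + smul (t * m) g = smul (t * add_ord g) g"
    by (simp add: m flip: smul_add_left)
  also have "\<dots> = 0"
    by (simp add: smul_mult)
  finally show ?thesis
    by (simp add: m neg_eq_iff_add_eq_0)
qed

definition cyclic :: "'a::ab_group_add \<Rightarrow> 'a set" where
  "cyclic g = range (\<lambda>t. smul t g)"

lemma add_subgroup_cyclic: "add_subgroup (cyclic (g::'a::{ab_group_add,finite}))"
  unfolding add_subgroup_def cyclic_def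
  by (auto simp: minus_smul_eq_smul simp flip: smul_add_left intro: range_eqI[of _ _ 0])

lemma smul_mem_cyclic: "smul t g \<in> cyclic g"
  unfolding cyclic_def by blast

lemma trivial_meet_cyclicD: "K \<inter> cyclic g = {0} \<Longrightarrow> smul t g \<in> K \<Longrightarrow> smul t g = 0"
  using smul_mem_cyclic by blast

definition adjoin :: "'a::ab_group_add set \<Rightarrow> 'a \<Rightarrow> 'a set" where
  "adjoin K x = {k + smul t x | k t. k \<in> K}"

lemma add_subgroup_adjoin:
  fixes x :: "'a::{ab_group_add,finite}"
  assumes K: "add_subgroup K"
  shows "add_subgroup (adjoin K x)"
  unfolding add_subgroup_def
proof (intro conjI ballI)
  have "0 = 0 + smul 0 x" by simp
  then show "0 \<in> adjoin K x"
    unfolding adjoin_def using add_subgroup_zero[OF K] by blast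
  fix y z assume "y \<in> adjoin K x" "z \<in> adjoin K x"
  then obtain k t k' t' where y: "y = k + smul t x" "k \<in> K" and z: "z = k' + smul t' x" "k' \<in> K"
    unfolding adjoin_def by blast
  have "y + z = (k + k') + smul (t + t') x"
    by (simp add: y z smul_add_left algebra_simps)
  then show "y + z \<in> adjoin K x"
    unfolding adjoin_def using add_subgroup_add[OF K y(2) z(2)] by blast
  have "- y = - k + smul (t * (add_ord x - 1)) x"
    unfolding y(1) minus_smul_eq_smul[symmetric] by simp
  then show "- y \<in> adjoin K x"
    unfolding adjoin_def using add_subgroup_minus[OF K y(2)] by blast
qed

lemma subset_adjoin: "K \<subseteq> adjoin K x"
proof
  fix k assume "k \<in> K"
  moreover have "k = k + smul 0 x" by simp
  ultimately show "k \<in> adjoin K x" unfolding adjoin_def by blast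
qed

lemma smul_mem_adjoin: "add_subgroup K \<Longrightarrow> smul t x \<in> adjoin K x"
proof -
  have "smul t x = 0 + smul t x" by simp
  then show "add_subgroup K \<Longrightarrow> smul t x \<in> adjoin K x"
    unfolding adjoin_def using add_subgroup_zero by blast
qed

lemma adjoin_subset: "add_subgroup H \<Longrightarrow> K \<subseteq> H \<Longrightarrow> x \<in> H \<Longrightarrow> adjoin K x \<subseteq> H"
  unfolding adjoin_def by (auto intro: add_subgroup_add add_subgroup_smul)

text \<open>If \<open>add_ord h\<close> does not divide \<open>add_ord g\<close>, some prime \<open>p\<close> occurs in it to a
  higher power, and the \<open>p\<close>-free part of \<open>g\<close> plus the \<open>p\<close>-part of \<open>h\<close> has larger
  order than \<open>g\<close>.\<close>

lemma add_ord_dvd_max: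
  fixes H :: "'a::{ab_group_add,finite} set"
  assumes H: "add_subgroup H" "g \<in> H" "h \<in> H" and max: "\<forall>x\<in>H. add_ord x \<le> add_ord g"
  shows "add_ord h dvd add_ord g"
proof (rule ccontr)
  assume "\<not> add_ord h dvd add_ord g"
  then obtain p where p: "prime p" "multiplicity p (add_ord g) < multiplicity p (add_ord h)"
    using multiplicity_le_imp_dvd[of "add_ord h" "add_ord g"] add_ord_pos[of h] by (metis not_le not_gr0)
  define e where "e = multiplicity p (add_ord h)"
  define f where "f = multiplicity p (add_ord g)"
  obtain m where m: "add_ord g = p ^ f * m" "\<not> p dvd m"
    using multiplicity_decompose'[of "add_ord g" p] add_ord_pos[of g] p(1)
    unfolding f_def by (metis not_prime_unit not_gr0)
  obtain q where q: "add_ord h = p ^ e * q"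
    using multiplicity_dvd[of p "add_ord h"] unfolding e_def by blast
  have "0 < m" "0 < q" "1 < p"
    using m(1) q add_ord_pos[of g] add_ord_pos[of h] prime_gt_1_nat[OF p(1)] by auto
  have "add_ord (smul (p ^ f) g) = m"
    using add_ord_smul[of "p ^ f" g] m(1) \<open>1 < p\<close> by simp
  moreover have "add_ord (smul q h) = p ^ e"
    using add_ord_smul[of q h] q \<open>0 < q\<close> by simp
  moreover have "coprime m (p ^ e)"
    using m(2) p(1) prime_imp_coprime[of p m] by (simp add: coprime_commute)
  ultimately have "add_ord (smul (p ^ f) g + smul q h) = m * p ^ e"
    by (simp add: add_ord_add_coprime)
  moreover have "smul (p ^ f) g + smul q h \<in> H"
    using H by (intro add_subgroup_add add_subgroup_smul)
  ultimately have "m * p ^ e \<le> p ^ f * m"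
    using max m(1) by metis
  moreover have "p ^ f < p ^ e"
    using p(2) \<open>1 < p\<close> unfolding e_def f_def by (simp add: power_strict_increasing)
  ultimately show False using \<open>0 < m\<close> by (simp add: mult.commute)
qed

lemma obtain_prime_multiple_mem:
  fixes h :: "'a::{ab_group_add,finite}"
  assumes S: "add_subgroup S" and h: "h \<notin> S"
  obtains p t where "prime p" "smul t h \<notin> S" "smul p (smul t h) \<in> S"
proof -
  define T where "T = {t. 0 < t \<and> smul t h \<in> S}"
  have "add_ord h \<in> T"
    unfolding T_def using add_ord_pos add_subgroup_zero[OF S] by simp
  define t0 where "t0 = (LEAST t. t \<in> T)"
  have t0: "t0 \<in> T" and t0_min: "\<And>t. t \<in> T \<Longrightarrow> t0 \<le> t"
    unfolding t0_def using \<open>add_ord h \<in> T\<close> by (auto intro: LeastI Least_le)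
  have "t0 \<noteq> 1"
    using t0 h by (auto simp: T_def)
  then obtain p where p: "prime p" "p dvd t0"
    using prime_factor_nat by blast
  from p(2) obtain t where t0_eq: "t0 = p * t" ..
  have "0 < t" "t < t0"
    using t0 t0_eq prime_gt_1_nat[OF p(1)] by (auto simp: T_def)
  then have "smul t h \<notin> S"
    using t0_min by (force simp: T_def)
  moreover have "smul p (smul t h) \<in> S"
    using t0 t0_eq by (simp add: T_def flip: smul_mult)
  ultimately show thesis using p(1) that by blast
qed

lemma prime_dvd_of_smul_mem:
  assumes S: "add_subgroup S" and h: "h \<notin> S" "smul p h \<in> S" "smul m h = 0" and "prime p"
  shows "p dvd m"
proof (rule ccontr)
  assume "\<not> p dvd m"
  then have "coprime p m"
    using \<open>prime p\<close> by (simp add: prime_imp_coprime)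
  then obtain x y where xy: "p * x = m * y + 1"
    using bezout_nat[of p m] prime_gt_0_nat[OF \<open>prime p\<close>] by auto
  have "smul x (smul p h) = smul y (smul m h) + h"
    by (simp only: smul_commute[of x] smul_commute[of y] flip: smul_mult)
       (simp add: xy smul_add_left mult.commute)
  then have "h = smul x (smul p h)"
    using h(3) by simp
  then show False
    using add_subgroup_smul[OF S h(2)] h(1) by metis
qed

lemma obtain_shift_prime_multiple_mem:
  fixes g h :: "'a::{ab_group_add,finite}"
  assumes K: "add_subgroup K" "K \<inter> cyclic g = {0}"
    and h: "h \<notin> adjoin K g" "smul (add_ord g) h = 0"
    and p: "prime p" "smul p h \<in> adjoin K g"
  obtains b where "h - smul b g \<notin> adjoin K g" "smul p (h - smul b g) \<in> K"
proof -
  have S: "add_subgroup (adjoin K g)"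
    by (rule add_subgroup_adjoin[OF K(1)])
  obtain q where m: "add_ord g = p * q"
    using prime_dvd_of_smul_mem[OF S h(1) p(2) h(2) p(1)] ..
  have "0 < q"
    using m add_ord_pos[of g] by (metis gr0I mult_0_right)
  obtain k a where ka: "smul p h = k + smul a g" "k \<in> K"
    using p(2) unfolding adjoin_def by blast
  have "0 = smul q (smul p h)"
    using h(2) by (simp add: m smul_mult smul_commute[of p q])
  also have "\<dots> = smul q k + smul (q * a) g"
    by (simp add: ka smul_add_right smul_mult)
  finally have "smul (q * a) g = - smul q k"
    by (simp add: eq_neg_iff_add_eq_0 add.commute)
  then have "smul (q * a) g \<in> K"
    using K(1) ka(2) by (metis add_subgroup_minus add_subgroup_smul)
  then have "p * q dvd q * a"
    using trivial_meet_cyclicD[OF K(2)] smul_eq_zero_iff_add_ord_dvd m by metis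
  then obtain b where b: "a = p * b"
    using \<open>0 < q\<close> by (auto simp: mult.commute[of q])
  have "smul p (h - smul b g) = k"
    by (simp add: smul_diff_right ka b smul_commute[of p b] flip: smul_mult)
  moreover have "h - smul b g \<notin> adjoin K g"
  proof
    assume "h - smul b g \<in> adjoin K g"
    then have "(h - smul b g) + smul b g \<in> adjoin K g"
      using add_subgroup_add[OF S _ smul_mem_adjoin[OF K(1)]] by blast
    then show False using h(1) by simp
  qed
  ultimately show thesis using ka(2) that by simp
qed

lemma trivial_meet_cyclic_adjoin:
  fixes g h :: "'a::{ab_group_add,finite}"
  assumes K: "add_subgroup K" "K \<inter> cyclic g = {0}"
    and p: "prime p" and h: "h \<notin> adjoin K g" "smul p h \<in> K"
  shows "adjoin K h \<inter> cyclic g = {0}"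
proof -
  have "x = 0" if x: "x \<in> adjoin K h" "x \<in> cyclic g" for x
  proof -
    obtain k c where kc: "x = k + smul c h" "k \<in> K"
      using x(1) unfolding adjoin_def by blast
    show ?thesis
    proof (cases "p dvd c")
      case True
      then obtain c' where "c = p * c'" ..
      then have "x \<in> K"
        using kc K(1) h(2) by (simp add: smul_commute[of p] smul_mult add_subgroup_add add_subgroup_smul)
      then show ?thesis using x(2) K(2) by blast
    next
      case False
      \<comment> \<open>then h itself lies in K + \<langle>g\<rangle>, as c is invertible modulo p\<close>
      then have "coprime p c" "c \<noteq> 0"
        using p by (auto simp: prime_imp_coprime intro: gr0I)
      then obtain u w where uw: "c * u = p * w + 1"
        using bezout_nat[of c p] by (auto simp: coprime_commute)
      have "h = smul u (smul c h) - smul w (smul p h)"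
        by (simp add: smul_commute[of u] smul_commute[of w] uw smul_add_left
            mult.commute[of _ c] mult.commute[of _ p] flip: smul_mult)
      moreover have "smul c h \<in> adjoin K g"
      proof -
        have "x \<in> adjoin K g"
          using x(2) smul_mem_adjoin[OF K(1)] unfolding cyclic_def by blast
        then have "x - k \<in> adjoin K g"
          using kc(2) subset_adjoin add_subgroup_diff[OF add_subgroup_adjoin[OF K(1)]] by blast
        then show ?thesis using kc(1) by simp
      qed
      ultimately have "h \<in> adjoin K g"
        using h(2) subset_adjoin add_subgroup_adjoin[OF K(1)]
        by (metis add_subgroup_diff add_subgroup_smul subsetD)
      then show ?thesis using h(1) by blast
    qed
  qed
  moreover have "0 \<in> adjoin K h" "0 \<in> cyclic g"
    using add_subgroup_zero[OF add_subgroup_adjoin[OF K(1)]] add_subgroup_zero[OF add_subgroup_cyclic]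
    by blast+
  ultimately show ?thesis by blast
qed

text \<open>A subgroup \<open>K\<close> maximal among those meeting \<open>\<langle>g\<rangle>\<close> trivially satisfies
  \<open>K + \<langle>g\<rangle> = H\<close>: otherwise the preceding lemmas produce an element whose
  adjunction to \<open>K\<close> still meets \<open>\<langle>g\<rangle>\<close> trivially.\<close>

lemma obtain_complement_cyclic:
  fixes H :: "'a::{ab_group_add,finite} set"
  assumes H: "add_subgroup H" "g \<in> H" "\<forall>h\<in>H. smul (add_ord g) h = 0"
  obtains K where "add_subgroup K" "K \<subseteq> H" "K \<inter> cyclic g = {0}" "adjoin K g = H"
proof -
  define C where "C = {K. add_subgroup K \<and> K \<subseteq> H \<and> K \<inter> cyclic g = {0}}"
  have "{0} \<in> C"
    using add_subgroup_zero[OF H(1)] add_subgroup_zero[OF add_subgroup_cyclic[of g]]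
    by (auto simp: C_def add_subgroup_def)
  then obtain K where K: "K \<in> C" and K_max: "\<And>K'. K' \<in> C \<Longrightarrow> K \<subseteq> K' \<Longrightarrow> K = K'"
    using finite_has_maximal[of C] by (auto simp: finite_subset[of C UNIV])
  then have K_sub: "add_subgroup K" "K \<subseteq> H" "K \<inter> cyclic g = {0}"
    by (auto simp: C_def)
  have "H \<subseteq> adjoin K g"
  proof
    fix h0 assume "h0 \<in> H"
    show "h0 \<in> adjoin K g"
    proof (rule ccontr)
      assume "h0 \<notin> adjoin K g"
      then obtain p t where p: "prime p" "smul t h0 \<notin> adjoin K g" "smul p (smul t h0) \<in> adjoin K g"
        using obtain_prime_multiple_mem[OF add_subgroup_adjoin[OF K_sub(1)]] by metis
      moreover have "smul (add_ord g) (smul t h0) = 0"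
        using H(3) \<open>h0 \<in> H\<close> by (simp add: smul_commute[of _ t])
      ultimately obtain b where b: "smul t h0 - smul b g \<notin> adjoin K g"
        "smul p (smul t h0 - smul b g) \<in> K"
        using obtain_shift_prime_multiple_mem[OF K_sub(1,3)] by metis
      define h where "h = smul t h0 - smul b g"
      have "h \<in> H"
        unfolding h_def using H(1,2) \<open>h0 \<in> H\<close> by (intro add_subgroup_diff add_subgroup_smul)
      then have "adjoin K h \<in> C"
        using trivial_meet_cyclic_adjoin[OF K_sub(1,3) p(1)] b H(1) K_sub
        by (simp add: C_def h_def add_subgroup_adjoin adjoin_subset)
      moreover have "h \<in> adjoin K h" "h \<notin> K"
        using smul_mem_adjoin[OF K_sub(1), of 1 h] subset_adjoin[of K g] b(1) by (auto simp: h_def)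
      ultimately show False
        using K_max[of "adjoin K h"] subset_adjoin[of K h] by blast
    qed
  qed
  then have "adjoin K g = H"
    using adjoin_subset[OF H(1) K_sub(2) H(2)] by blast
  then show thesis using K_sub that by blast
qed

lemma dvd_chain_snoc:
  assumes "dvd_chain ns" "1 < m" "\<And>i. i < length ns \<Longrightarrow> ns ! i dvd m"
  shows "dvd_chain (ns @ [m])"
  using assms unfolding dvd_chain_def
  by (auto simp: nth_append less_Suc_eq not_less_eq intro: le_antisym)

lemma sum_upd_lessThan_Suc:
  "(\<Sum>i<Suc (length ns). smul (a i) ((b(length ns := g)) i))
     = (\<Sum>i<length ns. smul (a i) (b i)) + smul (a (length ns)) g"
  by simp

lemma indep_snoc:
  fixes g :: "'a::{ab_group_add,finite}"
  assumes ind: "indep b ns" and b_K: "\<forall>i<length ns. b i \<in> K"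
    and K: "add_subgroup K" "K \<inter> cyclic g = {0}"
  shows "indep (b(length ns := g)) (ns @ [add_ord g])"
  unfolding indep_def length_append_singleton sum_upd_lessThan_Suc
proof (intro allI)
  fix a c :: "nat \<Rightarrow> nat"
  let ?r = "length ns"
  let ?A = "\<Sum>i<?r. smul (a i) (b i)" and ?C = "\<Sum>i<?r. smul (c i) (b i)"
  have "?A \<in> K" "?C \<in> K"
    using b_K K(1) by (auto intro!: add_subgroup_sum add_subgroup_smul)
  \<comment> \<open>the difference of the K-parts lies in the cyclic group of g, hence vanishes\<close>
  have "?A + smul (a ?r) g = ?C + smul (c ?r) g \<longleftrightarrow> ?A = ?C \<and> smul (a ?r) g = smul (c ?r) g"
  proof
    assume eq: "?A + smul (a ?r) g = ?C + smul (c ?r) g"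
    have "?A - ?C = smul (c ?r) g - smul (a ?r) g"
      using eq by (simp add: algebra_simps)
    moreover have "smul (c ?r) g - smul (a ?r) g \<in> cyclic g"
      by (intro add_subgroup_diff[OF add_subgroup_cyclic] smul_mem_cyclic)
    moreover have "?A - ?C \<in> K"
      using K(1) \<open>?A \<in> K\<close> \<open>?C \<in> K\<close> by (rule add_subgroup_diff)
    ultimately have "?A - ?C = 0"
      using K(2) by (metis IntI singletonD)
    then show "?A = ?C \<and> smul (a ?r) g = smul (c ?r) g"
      using eq by simp
  qed simp
  also have "\<dots> \<longleftrightarrow> (\<forall>i<Suc ?r. a i mod (ns @ [add_ord g]) ! i = c i mod (ns @ [add_ord g]) ! i)"
    using indepD[OF ind, of a c] smul_eq_smul_iff_mod_add_ord[of "a ?r" g "c ?r"]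
    by (auto simp: nth_append less_Suc_eq)
  finally show "?A + smul (a ?r) g = ?C + smul (c ?r) g
      \<longleftrightarrow> (\<forall>i<Suc ?r. a i mod (ns @ [add_ord g]) ! i = c i mod (ns @ [add_ord g]) ! i)" .
qed

lemma spans_snoc:
  assumes "spans K b ns"
  shows "spans (adjoin K g) (b(length ns := g)) (ns @ [m])"
  unfolding spans_def length_append_singleton sum_upd_lessThan_Suc
proof
  fix x assume "x \<in> adjoin K g"
  then obtain k t where kt: "x = k + smul t g" "k \<in> K"
    unfolding adjoin_def by blast
  then obtain a where "k = (\<Sum>i<length ns. smul (a i) (b i))"
    using assms unfolding spans_def by blast
  then have "x = (\<Sum>i<length ns. smul ((a(length ns := t)) i) (b i)) + smul ((a(length ns := t)) (length ns)) g"
    using kt(1) by simp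
  then show "\<exists>a. x = (\<Sum>i<length ns. smul (a i) (b i)) + smul (a (length ns)) g" by blast
qed

lemma obtain_max_add_ord:
  fixes H :: "'a::{ab_group_add,finite} set"
  assumes H: "add_subgroup H" "\<not> H \<subseteq> {0}"
  obtains g where "g \<in> H" "1 < add_ord g" "\<forall>h\<in>H. smul (add_ord g) h = 0"
proof -
  have "Max (add_ord ` H) \<in> add_ord ` H"
    using add_subgroup_zero[OF H(1)] by (intro Max_in) auto
  then obtain g where "g \<in> H" "add_ord g = Max (add_ord ` H)"
    by (metis imageE)
  then have g: "g \<in> H" "\<forall>h\<in>H. add_ord h \<le> add_ord g"
    by simp_all
  obtain h0 where "h0 \<in> H" "h0 \<noteq> 0"
    using H(2) by blast
  then have "1 < add_ord g"
    using g(2) one_less_add_ord_iff[of h0] by fastforce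
  moreover have "\<forall>h\<in>H. smul (add_ord g) h = 0"
    using add_ord_dvd_max[OF H(1) g(1) _ g(2)] smul_eq_zero_iff_add_ord_dvd by blast
  ultimately show thesis using g(1) that by blast
qed

lemma exists_basis_add_subgroup:
  fixes H :: "'a::{ab_group_add,finite} set"
  assumes "add_subgroup H"
  shows "\<exists>b ns. dvd_chain ns \<and> indep b ns \<and> spans H b ns \<and> (\<forall>i<length ns. b i \<in> H)"
  using assms
proof (induction "card H" arbitrary: H rule: less_induct)
  case less
  show ?case
  proof (cases "H \<subseteq> {0}")
    case True
    then have "dvd_chain [] \<and> indep (\<lambda>_. 0::'a) [] \<and> spans H (\<lambda>_. 0) []"
      unfolding dvd_chain_def indep_def spans_def by auto
    then show ?thesis by fastforce
  next
    case False
    then obtain g where g: "g \<in> H" "1 < add_ord g" "\<forall>h\<in>H. smul (add_ord g) h = 0"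
      using obtain_max_add_ord[OF less.prems] by blast
    obtain K where K: "add_subgroup K" "K \<subseteq> H" "K \<inter> cyclic g = {0}" "adjoin K g = H"
      using obtain_complement_cyclic[OF less.prems g(1,3)] by blast
    have "g \<notin> K"
      using K(3) smul_mem_cyclic[of 1 g] g(2) one_less_add_ord_iff[of g] by auto
    then have "card K < card H"
      using K(2) g(1) by (intro psubset_card_mono) auto
    then obtain b ns where basis: "dvd_chain ns" "indep b ns" "spans K b ns" "\<forall>i<length ns. b i \<in> K"
      using less.hyps K(1) by blast
    have "dvd_chain (ns @ [add_ord g])"
      using basis(1,2,4) K(2) g(2,3)
      by (intro dvd_chain_snoc) (auto simp: indep_smul_eq_zero_iff[symmetric])
    moreover have "indep (b(length ns := g)) (ns @ [add_ord g])"
      using basis(2,4) K(1,3) by (rule indep_snoc)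
    moreover have "spans H (b(length ns := g)) (ns @ [add_ord g])"
      using spans_snoc[OF basis(3), of g "add_ord g"] K(4) by simp
    ultimately show ?thesis
      using basis(4) K(2) g(1) by (intro exI[of _ "b(length ns := g)"] exI[of _ "ns @ [add_ord g]"]) auto
  qed
qed

section \<open>Bases and invariant decompositions\<close>

lemma inv_decomp_of_basis:
  fixes b :: "nat \<Rightarrow> 'a::ab_group_add"
  assumes chain: "dvd_chain ns" and ind: "indep b ns" and span: "spans UNIV b ns"
  shows "is_inv_decomp TYPE('a) ns"
proof -
  define r where "r = length ns"
  define \<phi> where "\<phi> w = (\<Sum>i<r. smul (w ! i) (b i))" for w
  have pos: "0 < ns ! i" if "i < r" for i
    using dvd_chain_nth_pos[OF chain, of i] that by (simp add: r_def)
  have carrier: "w \<in> cyc_carrier ns \<longleftrightarrow> length w = r \<and> (\<forall>i<r. w ! i < ns ! i)" for w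
    by (simp add: cyc_carrier_def r_def)
  have \<phi>_eq: "\<phi> w = (\<Sum>i<r. smul (a i) (b i)) \<longleftrightarrow> (\<forall>i<r. w ! i mod ns ! i = a i mod ns ! i)" for w a
    unfolding \<phi>_def r_def by (rule indepD[OF ind])
  have inj: "inj_on \<phi> (cyc_carrier ns)"
    by (rule inj_onI) (auto simp: \<phi>_eq[of _ "\<lambda>i. _ ! i", folded \<phi>_def] carrier intro: nth_equalityI)
  have "x \<in> \<phi> ` cyc_carrier ns" for x
  proof -
    obtain a where a: "x = (\<Sum>i<r. smul (a i) (b i))"
      using span unfolding spans_def r_def by blast
    define w where "w = map (\<lambda>i. a i mod ns ! i) [0..<r]"
    have "w \<in> cyc_carrier ns" "\<phi> w = x"
      using pos by (auto simp: carrier w_def a \<phi>_eq)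
    then show ?thesis by blast
  qed
  then have bij: "bij_betw \<phi> (cyc_carrier ns) UNIV"
    using inj by (auto simp: bij_betw_def)
  have add: "cyc_add ns w w' \<in> cyc_carrier ns \<and> \<phi> (cyc_add ns w w') = \<phi> w + \<phi> w'"
    if "w \<in> cyc_carrier ns" "w' \<in> cyc_carrier ns" for w w'
  proof -
    have "\<phi> w + \<phi> w' = (\<Sum>i<r. smul (w ! i + w' ! i) (b i))"
      by (simp add: \<phi>_def smul_add_left sum.distrib)
    then show ?thesis
      using pos by (auto simp: carrier cyc_add_def r_def[symmetric] \<phi>_eq mod_add_eq)
  qed
  define f where "f = inv_into (cyc_carrier ns) \<phi>"
  have f: "f x \<in> cyc_carrier ns" "\<phi> (f x) = x" for x
    using bij by (auto simp: f_def bij_betw_def inv_into_into f_inv_into_f)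
  have "f (x + y) = cyc_add ns (f x) (f y)" for x y
    using inj f add[OF f(1) f(1)] by (auto intro: inj_onD)
  then show ?thesis
    using chain bij_betw_inv_into[OF bij] unfolding is_inv_decomp_def dvd_chain_def f_def by blast
qed

lemma double_mod_eq_imp_zero:
  assumes "w < (n::nat)" "w = (w + w) mod n"
  shows "w = 0"
proof (cases "w + w < n")
  case False
  then have "(w + w) mod n = w + w - n"
    using assms(1) by (simp add: le_mod_geq)
  then show ?thesis using assms by simp
qed (use assms in simp)

locale inv_decomp_iso =
  fixes ns :: "nat list" and f :: "'a::ab_group_add \<Rightarrow> nat list"
  assumes chain: "dvd_chain ns"
    and bij: "bij_betw f UNIV (cyc_carrier ns)"
    and hom: "\<And>x y. f (x + y) = cyc_add ns (f x) (f y)"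
begin

lemma length_f: "length (f x) = length ns"
  and nth_f_less: "i < length ns \<Longrightarrow> f x ! i < ns ! i"
  using bij by (auto simp: bij_betw_def cyc_carrier_def)

lemma nth_f_add: "i < length ns \<Longrightarrow> f (x + y) ! i = (f x ! i + f y ! i) mod ns ! i"
  by (simp add: hom cyc_add_def)

lemma nth_f_zero: "i < length ns \<Longrightarrow> f 0 ! i = 0"
  using nth_f_add[of i 0 0] nth_f_less[of i 0] by (auto intro: double_mod_eq_imp_zero)

lemma nth_f_smul: "i < length ns \<Longrightarrow> f (smul t x) ! i = t * f x ! i mod ns ! i"
  by (induction t) (simp_all add: nth_f_zero nth_f_add mod_add_right_eq)

lemma nth_f_sum: "i < length ns \<Longrightarrow> f (\<Sum>j<(m::nat). g j) ! i = (\<Sum>j<m. f (g j) ! i) mod ns ! i"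
  by (induction m) (simp_all add: nth_f_zero nth_f_add mod_add_left_eq)

definition unit_vec :: "nat \<Rightarrow> 'a" where
  "unit_vec j = inv f (map (\<lambda>i. if i = j then 1 else 0) [0..<length ns])"

lemma f_unit_vec: "f (unit_vec j) = map (\<lambda>i. if i = j then 1 else 0) [0..<length ns]"
proof -
  have "map (\<lambda>i. if i = j then 1 else 0) [0..<length ns] \<in> cyc_carrier ns"
    using dvd_chain_nth_gt_1[OF chain] dvd_chain_nth_pos[OF chain] by (auto simp: cyc_carrier_def)
  then show ?thesis
    using bij by (auto simp: unit_vec_def bij_betw_def f_inv_into_f)
qed

lemma f_lincomb_unit_vec:
  "f (\<Sum>j<length ns. smul (a j) (unit_vec j)) = map (\<lambda>i. a i mod ns ! i) [0..<length ns]"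
proof (rule nth_equalityI)
  fix i assume "i < length (f (\<Sum>j<length ns. smul (a j) (unit_vec j)))"
  then have i: "i < length ns" by (simp add: length_f)
  have "(\<Sum>j<length ns. a j * f (unit_vec j) ! i mod ns ! i)
      = (\<Sum>j<length ns. if j = i then a i mod ns ! i else 0)"
    using i by (intro sum.cong) (auto simp: f_unit_vec)
  also have "\<dots> = a i mod ns ! i"
    using i by simp
  finally have "(\<Sum>j<length ns. a j * f (unit_vec j) ! i mod ns ! i) = a i mod ns ! i" .
  then show "f (\<Sum>j<length ns. smul (a j) (unit_vec j)) ! i = map (\<lambda>i. a i mod ns ! i) [0..<length ns] ! i"
    using i by (simp add: nth_f_sum nth_f_smul)
qed (simp add: length_f)

lemma indep_unit_vec: "indep unit_vec ns"
  unfolding indep_def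
proof (intro allI)
  fix a c :: "nat \<Rightarrow> nat"
  have "inj f" using bij by (simp add: bij_betw_def)
  then have "(\<Sum>j<length ns. smul (a j) (unit_vec j)) = (\<Sum>j<length ns. smul (c j) (unit_vec j))
      \<longleftrightarrow> f (\<Sum>j<length ns. smul (a j) (unit_vec j)) = f (\<Sum>j<length ns. smul (c j) (unit_vec j))"
    by (auto dest: injD)
  also have "\<dots> \<longleftrightarrow> map (\<lambda>i. a i mod ns ! i) [0..<length ns] = map (\<lambda>i. c i mod ns ! i) [0..<length ns]"
    by (simp only: f_lincomb_unit_vec)
  also have "\<dots> \<longleftrightarrow> (\<forall>i<length ns. a i mod ns ! i = c i mod ns ! i)"
    by (auto simp: map_eq_conv)
  finally show "(\<Sum>j<length ns. smul (a j) (unit_vec j)) = (\<Sum>j<length ns. smul (c j) (unit_vec j))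
      \<longleftrightarrow> (\<forall>i<length ns. a i mod ns ! i = c i mod ns ! i)" .
qed

lemma lincomb_f: "(\<Sum>i<length ns. smul (f x ! i) (unit_vec i)) = x"
proof -
  have "f (\<Sum>i<length ns. smul (f x ! i) (unit_vec i)) = f x"
    unfolding f_lincomb_unit_vec by (rule nth_equalityI) (simp_all add: length_f nth_f_less)
  then show ?thesis
    using bij by (simp add: bij_betw_def inj_eq)
qed

lemma spans_unit_vec: "spans UNIV unit_vec ns"
  unfolding spans_def using lincomb_f by (metis UNIV_I)

end

lemma obtain_inv_decomp_iso:
  assumes "is_inv_decomp TYPE('a::ab_group_add) ns"
  obtains f :: "'a::ab_group_add \<Rightarrow> nat list" where "inv_decomp_iso ns f"
  using assms unfolding is_inv_decomp_def inv_decomp_iso_def dvd_chain_def by blast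

lemma obtain_basis_of_inv_decomp:
  assumes "is_inv_decomp TYPE('a::ab_group_add) ns"
  obtains b :: "nat \<Rightarrow> 'a::ab_group_add" where "dvd_chain ns" "indep b ns" "spans UNIV b ns"
proof -
  obtain f :: "'a \<Rightarrow> nat list" where "inv_decomp_iso ns f"
    using obtain_inv_decomp_iso[OF assms] .
  then interpret inv_decomp_iso ns f .
  show thesis using that chain indep_unit_vec spans_unit_vec .
qed

lemma exists_inv_decomp: "\<exists>ns. is_inv_decomp TYPE('a::{ab_group_add,finite}) ns"
proof -
  have "add_subgroup (UNIV :: 'a set)"
    unfolding add_subgroup_def by simp
  then show ?thesis
    using exists_basis_add_subgroup inv_decomp_of_basis by blast
qed

lemma card_torsion_lower:
  fixes b :: "nat \<Rightarrow> 'a::{ab_group_add,finite}"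
  assumes chain: "dvd_chain ns" and ind: "indep b ns" and "ns \<noteq> []"
    and p: "prime p" "p dvd ns ! 0"
  shows "p ^ length ns \<le> card {x::'a. smul p x = 0}"
proof -
  define r where "r = length ns"
  define q where "q i = ns ! i div p" for i
  have ns_eq: "ns ! i = p * q i" if "i < r" for i
    using dvd_trans[OF p(2) dvd_chain_nth_dvd[OF chain, of 0 i]] that by (simp add: q_def r_def)
  have q_pos: "0 < q i" if "i < r" for i
    using ns_eq[OF that] dvd_chain_nth_pos[OF chain, of i] that by (simp add: r_def)
  define L where "L = {l. set l \<subseteq> {..<p} \<and> length l = r}"
  define \<phi> where "\<phi> l = (\<Sum>i<r. smul (l ! i * q i) (b i))" for l
  have \<phi>_eq: "\<phi> l = (\<Sum>i<r. smul (c i) (b i)) \<longleftrightarrow> (\<forall>i<r. l ! i * q i mod ns ! i = c i mod ns ! i)"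
    for l c
    unfolding \<phi>_def r_def by (rule indepD[OF ind])
  have "\<phi> ` L \<subseteq> {x. smul p x = 0}"
  proof clarify
    fix l assume "l \<in> L"
    have "smul p (\<phi> l) = (\<Sum>i<r. smul (p * (l ! i * q i)) (b i))"
      by (simp add: \<phi>_def smul_sum_right smul_mult)
    also have "\<dots> = (\<Sum>i<r. smul 0 (b i))"
      using indepD[OF ind, of "\<lambda>i. p * (l ! i * q i)" "\<lambda>_. 0"] ns_eq by (simp add: r_def mult.left_commute)
    finally show "smul p (\<phi> l) = 0" by simp
  qed
  moreover have "inj_on \<phi> L"
  proof (rule inj_onI)
    fix l l' assume l: "l \<in> L" "l' \<in> L" "\<phi> l = \<phi> l'"
    show "l = l'"
    proof (rule nth_equalityI)
      show "length l = length l'" using l by (simp add: L_def)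
      fix i assume "i < length l"
      then have i: "i < r" "l ! i < p" "l' ! i < p"
        using l(1,2) by (auto simp: L_def subset_iff)
      then have "l ! i * q i mod ns ! i = l' ! i * q i mod ns ! i"
        using l(3) \<phi>_eq[of l "\<lambda>i. l' ! i * q i"] by (simp add: \<phi>_def)
      then show "l ! i = l' ! i"
        using i q_pos[OF i(1)] ns_eq[OF i(1)] by simp
    qed
  qed
  ultimately have "card L \<le> card {x::'a. smul p x = 0}"
    by (intro card_inj_on_le) simp_all
  moreover have "card L = p ^ r"
    unfolding L_def using card_lists_length_eq[of "{..<p}" r] by simp
  ultimately show ?thesis by (simp add: r_def)
qed

lemma (in inv_decomp_iso) card_torsion_upper:
  assumes "0 < p"
  shows "card {x::'a. smul p x = 0} \<le> p ^ length ns"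
proof -
  define r where "r = length ns"
  define L where "L = {l. set l \<subseteq> {..<p} \<and> length l = r}"
  define \<psi> where "\<psi> x = map (\<lambda>i. f x ! i * p div ns ! i) [0..<r]" for x
  have dvd: "ns ! i dvd f x ! i * p" if "smul p x = 0" "i < r" for x i
    using nth_f_smul[of i p x] nth_f_zero[of i] that by (simp add: r_def mult.commute dvd_eq_mod_eq_0)
  have "\<psi> x \<in> L" for x
  proof -
    have "f x ! i * p div ns ! i < p" if "i < r" for i
      using nth_f_less[of i x] dvd_chain_nth_pos[OF chain, of i] assms that
      by (simp add: r_def div_less_iff_less_mult mult.commute[of p])
    then show ?thesis by (auto simp: \<psi>_def L_def)
  qed
  then have img: "\<psi> ` {x::'a. smul p x = 0} \<subseteq> L"
    by blast
  have inj: "inj_on \<psi> {x::'a. smul p x = 0}"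
  proof (rule inj_onI)
    fix x y assume xy: "x \<in> {x::'a. smul p x = 0}" "y \<in> {x::'a. smul p x = 0}" "\<psi> x = \<psi> y"
    have "f x ! i = f y ! i" if "i < r" for i
    proof -
      have "f x ! i * p div ns ! i = f y ! i * p div ns ! i"
        using arg_cong[OF xy(3), of "\<lambda>l. l ! i"] that by (simp add: \<psi>_def)
      moreover have "f z ! i * p = f z ! i * p div ns ! i * ns ! i" if "smul p z = 0" for z
        using dvd_div_mult_self[OF dvd[OF that \<open>i < r\<close>]] by simp
      ultimately have "f x ! i * p = f y ! i * p"
        using xy(1,2) by (metis mem_Collect_eq)
      then show ?thesis using assms by simp
    qed
    then have "f x = f y"
      by (simp add: list_eq_iff_nth_eq length_f r_def)
    then show "x = y"
      using bij by (simp add: bij_betw_def inj_eq)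
  qed
  have "finite L"
    unfolding L_def using finite_lists_length_eq[of "{..<p}" r] by simp
  with inj img have "card {x::'a. smul p x = 0} \<le> card L"
    by (rule card_inj_on_le)
  also have "card L = p ^ r"
    unfolding L_def using card_lists_length_eq[of "{..<p}" r] by simp
  finally show ?thesis by (simp add: r_def)
qed

lemma length_inv_decomp_le:
  assumes ns: "is_inv_decomp TYPE('a::{ab_group_add,finite}) ns"
    and ms: "is_inv_decomp TYPE('a) ms"
  shows "length ns \<le> length ms"
proof (cases "ns = []")
  case False
  obtain b :: "nat \<Rightarrow> 'a" where b: "dvd_chain ns" "indep b ns"
    using obtain_basis_of_inv_decomp[OF ns] by metis
  have "ns ! 0 \<noteq> 1"
    using dvd_chain_nth_gt_1[OF b(1), of 0] False by simp
  then obtain p where p: "prime p" "p dvd ns ! 0"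
    using prime_factor_nat by blast
  obtain f :: "'a \<Rightarrow> nat list" where f: "inv_decomp_iso ms f"
    using obtain_inv_decomp_iso[OF ms] .
  have "p ^ length ns \<le> card {x::'a. smul p x = 0}"
    by (rule card_torsion_lower[OF b False p])
  also have "\<dots> \<le> p ^ length ms"
    by (rule inv_decomp_iso.card_torsion_upper[OF f prime_gt_0_nat[OF p(1)]])
  finally show ?thesis
    by (rule power_le_imp_le_exp[OF prime_gt_1_nat[OF p(1)]])
qed simp

lemma group_rank_eq:
  assumes "is_inv_decomp TYPE('a::{ab_group_add,finite}) ns"
  shows "group_rank TYPE('a) = length ns"
  unfolding group_rank_def
  using assms length_inv_decomp_le[OF assms] length_inv_decomp_le[OF _ assms]
  by (intro the_equality) (auto intro: le_antisym)

lemma group_exp_eq: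
  fixes b :: "nat \<Rightarrow> 'a::{ab_group_add,finite}"
  assumes chain: "dvd_chain ns" and ind: "indep b ns" and span: "spans UNIV b ns" and "ns \<noteq> []"
  shows "group_exp TYPE('a) = last ns"
proof -
  define r where "r = length ns - 1"
  have r: "r < length ns" "last ns = ns ! r"
    using \<open>ns \<noteq> []\<close> by (simp_all add: r_def last_conv_nth)
  have "smul (last ns) x = 0" for x :: 'a
  proof -
    obtain a where a: "x = (\<Sum>i<length ns. smul (a i) (b i))"
      using span unfolding spans_def by blast
    have "ns ! i dvd last ns" if "i < length ns" for i
      using dvd_chain_nth_dvd[OF chain, of i r] that r by (simp add: r_def)
    then have "\<forall>i<length ns. last ns * a i mod ns ! i = 0 mod ns ! i"
      by (simp add: mod_eq_0_iff_dvd)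
    then have "(\<Sum>i<length ns. smul (last ns * a i) (b i)) = (\<Sum>i<length ns. smul 0 (b i))"
      using indepD[OF ind, of "\<lambda>i. last ns * a i" "\<lambda>_. 0"] by blast
    then show ?thesis
      by (simp add: a smul_sum_right smul_mult)
  qed
  moreover have "last ns \<le> m" if "0 < m" "\<forall>x::'a. smul m x = 0" for m
    using that indep_smul_eq_zero_iff[OF ind r(1), of m] r(2) by (simp add: dvd_imp_le)
  ultimately show ?thesis
    unfolding group_exp_def sum_const_lessThan_eq_smul
    using dvd_chain_nth_pos[OF chain r(1)] r(2)
    by (intro Least_equality) auto
qed

section \<open>Sets of lengths\<close>

lemma in_delta_setI:
  assumes "0 < D" "l \<in> L" "l + D \<in> L" and cong: "\<And>x. x \<in> L \<Longrightarrow> int D dvd int x - int l"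
  shows "D \<in> delta_set L"
proof -
  have "L \<inter> {l..l + D} = {l, l + D}"
  proof (intro equalityI subsetI)
    fix x assume x: "x \<in> L \<inter> {l..l + D}"
    then obtain c where c: "int x - int l = int D * c"
      using cong by (auto elim: dvdE)
    have "0 \<le> int D * c" "int D * c \<le> int D * 1"
      using x c by auto
    then have "0 \<le> c" "c \<le> 1"
      using \<open>0 < D\<close> by (simp_all add: zero_le_mult_iff mult_le_cancel_left1)
    then have "c = 0 \<or> c = 1"
      by linarith
    then show "x \<in> {l, l + D}"
      using c by auto
  qed (use assms in auto)
  then show ?thesis
    using assms(1,2) unfolding delta_set_def by blast
qed

lemma in_delta_starI:
  fixes G0 :: "'a::ab_group_add set"
  assumes cong: "\<And>B l l'. B \<in> zss G0 \<Longrightarrow> l \<in> lengths G0 B \<Longrightarrow> l' \<in> lengths G0 B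
      \<Longrightarrow> int D dvd int l - int l'"
    and B: "B \<in> zss G0" "l \<in> lengths G0 B" "l' \<in> lengths G0 B"
    and D: "0 < D" "int D = \<bar>int l - int l'\<bar>"
  shows "D \<in> delta_star TYPE('a)"
proof -
  obtain l0 where l0: "l0 \<in> lengths G0 B" "l0 + D \<in> lengths G0 B"
  proof (cases "l \<le> l'")
    case True
    then have "l + D = l'" using D(2) by linarith
    then show thesis using B(2,3) by (intro that[of l]) auto
  next
    case False
    then have "l' + D = l" using D(2) by linarith
    then show thesis using B(2,3) by (intro that[of l']) auto
  qed
  then have "D \<in> Delta G0"
    using in_delta_setI[OF D(1) l0] cong[OF B(1) _ l0(1)] B(1) unfolding Delta_def by blast
  moreover have "D \<le> d" if d: "d \<in> Delta G0" for d
  proof -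
    obtain B' l1 where "B' \<in> zss G0" "0 < d" "l1 \<in> lengths G0 B'" "l1 + d \<in> lengths G0 B'"
      using d unfolding Delta_def delta_set_def by blast
    then have "int D dvd int d" "0 < d"
      using cong[of B' "l1 + d" l1] by simp_all
    then show ?thesis by (simp add: dvd_imp_le)
  qed
  ultimately have "Delta G0 \<noteq> {} \<and> Inf (Delta G0) = D"
    by (metis cInf_eq_minimum empty_iff)
  then show ?thesis
    unfolding delta_star_def by blast
qed

lemma lengths_dvd_diff_of_atom_weights:
  fixes \<delta> :: int
  assumes "0 < n"
    and atoms: "\<And>A. is_atom G0 A \<Longrightarrow> int n * \<delta> dvd int (size A) + \<delta> * int (count A e) - int n"
    and "l \<in> lengths G0 B" "l' \<in> lengths G0 B"
  shows "\<delta> dvd int l - int l'"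
proof -
  have factorization: "int n * \<delta> dvd
      int (size (sum_mset F)) + \<delta> * int (count (sum_mset F) e) - int n * int (size F)"
    if "\<forall>A\<in>#F. is_atom G0 A" for F
    using that
  proof (induction F)
    case (add A F)
    have "int (size (sum_mset (add_mset A F))) + \<delta> * int (count (sum_mset (add_mset A F)) e)
          - int n * int (size (add_mset A F))
        = (int (size A) + \<delta> * int (count A e) - int n)
          + (int (size (sum_mset F)) + \<delta> * int (count (sum_mset F) e) - int n * int (size F))"
      by (simp add: algebra_simps)
    then show ?case
      using add atoms by (simp only:) (simp add: dvd_add)
  qed simp
  obtain F F' where "\<forall>A\<in>#F. is_atom G0 A" "sum_mset F = B" "size F = l"
    "\<forall>A\<in>#F'. is_atom G0 A" "sum_mset F' = B" "size F' = l'"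
    using assms(3,4) unfolding lengths_def by blast
  then have "int n * \<delta> dvd int n * (int l - int l')"
    using dvd_diff[OF factorization[of F'] factorization[of F]] by (simp add: algebra_simps)
  then show ?thesis
    using assms(1) by simp
qed

lemma atom_eq_submset:
  "is_atom G0 A \<Longrightarrow> C \<subseteq># A \<Longrightarrow> C \<noteq> {#} \<Longrightarrow> sum_mset C = 0 \<Longrightarrow> A = C"
  unfolding is_atom_def by blast

lemma is_atom_replicate_mset:
  assumes "x \<in> G0" "0 < n" and order: "\<And>t. smul t x = 0 \<longleftrightarrow> n dvd t"
  shows "is_atom G0 (replicate_mset n x)"
  unfolding is_atom_def zss_def
proof (intro conjI allI impI)
  fix C assume C: "C \<subseteq># replicate_mset n x" "C \<noteq> {#}" "sum_mset C = 0"
  then obtain m where "m \<le> n" "C = replicate_mset m x"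
    by (elim msubseteq_replicate_msetE)
  moreover from this have "0 < m" "n dvd m"
    using C(2,3) order by (auto simp: sum_mset_replicate_mset_eq_smul)
  ultimately show "C = replicate_mset n x"
    by (metis dvd_imp_le le_antisym)
qed (use assms in \<open>auto simp: sum_mset_replicate_mset_eq_smul\<close>)

lemma sum_mset_count_smul:
  assumes "set_mset B \<subseteq> S" "finite S"
  shows "sum_mset B = (\<Sum>x\<in>S. smul (count B x) x)"
  using assms(1)
proof (induction B)
  case (add x B)
  have "(\<Sum>y\<in>S. smul (count (add_mset x B) y) y)
      = (\<Sum>y\<in>S. (if y = x then y else 0) + smul (count B y) y)"
    by (rule sum.cong) auto
  also have "\<dots> = x + (\<Sum>y\<in>S. smul (count B y) y)"
    using add.prems assms(2) by (simp add: sum.distrib)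
  finally show ?case using add by simp
qed simp

lemma multiset_eqI_on:
  assumes "set_mset A \<subseteq> S" "set_mset B \<subseteq> S" "\<forall>x\<in>S. count A x = count B x"
  shows "A = B"
proof (rule multiset_eqI)
  fix x show "count A x = count B x"
  proof (cases "x \<in> S")
    case False
    then have "x \<notin># A" "x \<notin># B" using assms(1,2) by blast+
    then show ?thesis by (simp add: not_in_iff)
  qed (use assms(3) in blast)
qed

lemma multiset_empty_onI: "set_mset A \<subseteq> S \<Longrightarrow> \<forall>x\<in>S. count A x = 0 \<Longrightarrow> A = {#}"
  using multiset_eqI_on[of A S "{#}"] by simp

lemma sum_mset_replicate_image_mset: "sum_mset (image_mset (replicate_mset n) M) = repeat_mset n M"
  by (induction M) simp_all

section \<open>Zero-sum sequences over an independent family and one further element\<close>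

locale indep_family =
  fixes v :: "nat \<Rightarrow> 'a::ab_group_add" and k n :: nat
  assumes two_le_n: "2 \<le> n" and indep: "indep v (replicate k n)"
begin

lemma lincomb_eq_iff:
  "(\<Sum>i<k. smul (a i) (v i)) = (\<Sum>i<k. smul (c i) (v i)) \<longleftrightarrow> (\<forall>i<k. a i mod n = c i mod n)"
  using indepD[OF indep] by simp

lemma smul_v_eq_zero_iff: "i < k \<Longrightarrow> smul t (v i) = 0 \<longleftrightarrow> n dvd t"
  using indep_smul_eq_zero_iff[OF indep] by simp

lemma inj_v: "inj_on v {..<k}"
proof (rule inj_onI, rule ccontr)
  fix i j assume ij: "i \<in> {..<k}" "j \<in> {..<k}" "v i = v j" "i \<noteq> j"
  then have "(\<Sum>l<k. smul (if l = i then 1 else 0) (v l)) = (\<Sum>l<k. smul (if l = j then 1 else 0) (v l))"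
    by (simp add: sum_smul_indicator)
  then have "\<forall>l<k. (if l = i then 1 else 0) mod n = ((if l = j then 1 else 0)::nat) mod n"
    by (simp only: lincomb_eq_iff)
  then have "(1::nat) mod n = 0 mod n"
    using ij by (metis lessThan_iff)
  then show False using two_le_n by simp
qed

end

locale extended_family = indep_family +
  fixes c :: nat
  assumes coprime_c: "coprime c n" and k_pos: "0 < k" and not_unit_vector: "1 < k \<or> c mod n \<noteq> 1"
begin

definition e0 :: 'a where
  "e0 = (\<Sum>i<k. smul c (v i))"

definition G0 :: "'a set" where
  "G0 = insert e0 (v ` {..<k})"

lemma smul_e0: "smul t e0 = (\<Sum>i<k. smul (t * c) (v i))"
  by (simp add: e0_def smul_sum_right smul_mult)

lemma e0_notin: "e0 \<notin> v ` {..<k}"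
proof
  assume "e0 \<in> v ` {..<k}"
  then obtain j where j: "j < k" "e0 = v j" by auto
  then have "(\<Sum>i<k. smul c (v i)) = (\<Sum>i<k. smul (if i = j then 1 else 0) (v i))"
    by (simp add: e0_def sum_smul_indicator)
  then have c: "\<forall>i<k. c mod n = (if i = j then 1 else 0) mod n"
    by (simp add: lincomb_eq_iff)
  show False
  proof (cases "1 < k")
    case True
    define i :: nat where "i = (if j = 0 then 1 else 0)"
    have "i < k" "i \<noteq> j"
      using True by (auto simp: i_def)
    then have "c mod n = 0"
      using c by simp
    then have "n dvd c"
      by (simp add: mod_eq_0_iff_dvd)
    then show False
      using coprime_c two_le_n by (simp add: coprime_absorb_right)
  next
    case False
    then show False
      using c j two_le_n not_unit_vector by (auto simp: less_Suc_eq)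
  qed
qed

lemma v_ne_e0: "i < k \<Longrightarrow> v i \<noteq> e0"
  using e0_notin by force

lemma finite_G0 [simp]: "finite G0"
  by (simp add: G0_def)

lemma card_G0: "card G0 = k + 1"
  using e0_notin inj_v by (simp add: G0_def card_image)

lemma ball_G0: "(\<forall>x\<in>G0. P x) \<longleftrightarrow> P e0 \<and> (\<forall>i<k. P (v i))"
  by (auto simp: G0_def)

lemma smul_G0_eq_zero_iff:
  assumes "x \<in> G0"
  shows "smul t x = 0 \<longleftrightarrow> n dvd t"
proof (cases "x = e0")
  case True
  have "smul t e0 = 0 \<longleftrightarrow> (\<Sum>i<k. smul (t * c) (v i)) = (\<Sum>i<k. smul 0 (v i))"
    by (simp add: smul_e0)
  also have "\<dots> \<longleftrightarrow> (\<forall>i<k. t * c mod n = 0 mod n)"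
    by (rule lincomb_eq_iff)
  also have "\<dots> \<longleftrightarrow> n dvd t * c"
    using k_pos by (auto simp: mod_eq_0_iff_dvd)
  also have "\<dots> \<longleftrightarrow> n dvd t"
    using coprime_c by (simp add: coprime_dvd_mult_left_iff coprime_commute)
  finally show ?thesis using True by simp
next
  case False
  then show ?thesis
    using assms smul_v_eq_zero_iff by (auto simp: G0_def)
qed

lemma is_atom_replicate_G0: "x \<in> G0 \<Longrightarrow> is_atom G0 (replicate_mset n x)"
  using two_le_n by (intro is_atom_replicate_mset) (simp_all add: smul_G0_eq_zero_iff)

lemma atom_eq_replicate:
  assumes "is_atom G0 A" "x \<in> G0" "n \<le> count A x"
  shows "A = replicate_mset n x"
  using atom_eq_submset[OF assms(1)] assms(3) is_atom_replicate_G0[OF assms(2)]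
  by (simp add: count_le_replicate_mset_subset_eq is_atom_def zss_def)

lemma sum_mset_G0:
  assumes "set_mset B \<subseteq> G0"
  shows "sum_mset B = (\<Sum>i<k. smul (count B (v i) + count B e0 * c) (v i))"
proof -
  have "sum_mset B = smul (count B e0) e0 + (\<Sum>x\<in>v ` {..<k}. smul (count B x) x)"
    using sum_mset_count_smul[OF assms finite_G0] e0_notin by (simp add: G0_def)
  also have "(\<Sum>x\<in>v ` {..<k}. smul (count B x) x) = (\<Sum>i<k. smul (count B (v i)) (v i))"
    using inj_v by (simp add: sum.reindex)
  also have "smul (count B e0) e0 = (\<Sum>i<k. smul (count B e0 * c) (v i))"
    by (rule smul_e0)
  also have "(\<Sum>i<k. smul (count B e0 * c) (v i)) + (\<Sum>i<k. smul (count B (v i)) (v i))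
      = (\<Sum>i<k. smul (count B (v i) + count B e0 * c) (v i))"
    by (simp only: smul_add_left sum.distrib add.commute)
  finally show ?thesis .
qed

lemma sum_mset_G0_eq_0_iff:
  "set_mset B \<subseteq> G0 \<Longrightarrow> sum_mset B = 0 \<longleftrightarrow> (\<forall>i<k. (count B (v i) + count B e0 * c) mod n = 0)"
  using lincomb_eq_iff[of _ "\<lambda>_. 0"] by (simp add: sum_mset_G0)

lemma count_e0_neq_0:
  assumes "set_mset A \<subseteq> G0" "A \<noteq> {#}" "\<forall>i<k. count A (v i) = count A e0"
  shows "count A e0 \<noteq> 0"
proof
  assume "count A e0 = 0"
  then have "\<forall>x\<in>G0. count A x = 0"
    using assms(3) ball_G0[of "\<lambda>x. count A x = 0"] by simp
  then show False
    using multiset_empty_onI[OF assms(1)] assms(2) by simp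
qed

definition repeat_G0 :: "'a multiset" where
  "repeat_G0 = repeat_mset n (mset_set G0)"

lemma count_repeat_G0: "count repeat_G0 x = (if x \<in> G0 then n else 0)"
  by (simp add: repeat_G0_def)

lemma card_G0_in_lengths: "k + 1 \<in> lengths G0 repeat_G0"
  unfolding lengths_def
  using is_atom_replicate_G0 sum_mset_replicate_image_mset[of n "mset_set G0"]
  by (intro CollectI exI[of _ "image_mset (replicate_mset n) (mset_set G0)"]) (auto simp: repeat_G0_def card_G0)

lemma set_mset_repeat_G0: "set_mset repeat_G0 \<subseteq> G0"
proof
  fix x assume "x \<in># repeat_G0"
  then have "count repeat_G0 x \<noteq> 0" by simp
  then show "x \<in> G0" by (simp add: count_repeat_G0 split: if_splits)
qed

lemma repeat_G0_zss: "repeat_G0 \<in> zss G0"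
  unfolding zss_def
  using sum_mset_G0_eq_0_iff[OF set_mset_repeat_G0] set_mset_repeat_G0
  by (simp add: count_repeat_G0 G0_def)

end

lemma add_mult_mod_Suc_eq_0_iff:
  fixes a b c :: nat
  shows "(a + b * c) mod Suc c = 0 \<longleftrightarrow> a mod Suc c = b mod Suc c"
proof -
  have "(a + b * c) mod (c + 1) = 0 \<longleftrightarrow> int (c + 1) dvd int a + int b * int c"
    by (simp add: mod_eq_0_iff_dvd flip: int_dvd_int_iff)
  also have "\<dots> \<longleftrightarrow> int (c + 1) dvd (int a - int b) + int b * int (c + 1)"
    by (simp add: algebra_simps)
  also have "\<dots> \<longleftrightarrow> int (c + 1) dvd int a - int b"
    by simp
  also have "\<dots> \<longleftrightarrow> a mod (c + 1) = b mod (c + 1)"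
    by (metis of_nat_mod mod_eq_dvd_iff of_nat_eq_iff)
  finally show ?thesis by simp
qed

lemma sum_mset_replicate_mset_eq_repeat_mset: "sum_mset (replicate_mset m M) = repeat_mset m M"
  by (induction m) simp_all

text \<open>Here \<open>c = n - 1\<close>, i.e.\ \<open>e0 = - (v 0 + \<dots> + v (k - 1))\<close>.\<close>

locale minus_sum_family = extended_family +
  assumes n_eq: "n = Suc c" and n_ne_Suc_k: "n \<noteq> k + 1"
begin

lemma sum_mset_eq_0_iff_counts:
  "set_mset B \<subseteq> G0 \<Longrightarrow> sum_mset B = 0 \<longleftrightarrow> (\<forall>i<k. count B (v i) mod n = count B e0 mod n)"
  by (simp add: sum_mset_G0_eq_0_iff n_eq add_mult_mod_Suc_eq_0_iff)

lemma is_atom_mset_set_G0: "is_atom G0 (mset_set G0)"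
  unfolding is_atom_def
proof (intro conjI allI impI)
  have "sum_mset (mset_set G0) = 0"
    by (subst sum_mset_eq_0_iff_counts) (auto simp: count_mset_set' G0_def)
  then show "mset_set G0 \<in> zss G0"
    by (simp add: zss_def)
  show "mset_set G0 \<noteq> {#}"
    by (simp add: mset_set_empty_iff G0_def)
  fix C assume C: "C \<subseteq># mset_set G0" "C \<noteq> {#}" "sum_mset C = 0"
  have set_C: "set_mset C \<subseteq> G0"
    using set_mset_mono[OF C(1)] by simp
  have le_1: "count C x \<le> 1" for x
    using mset_subset_eq_count[OF C(1), of x] by (simp add: count_mset_set' split: if_splits)
  have eq: "count C (v i) = count C e0" if "i < k" for i
  proof -
    have "count C (v i) mod n = count C e0 mod n"
      using sum_mset_eq_0_iff_counts[OF set_C] C(3) that by blast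
    then show ?thesis
      using le_1[of "v i"] le_1[of e0] two_le_n by simp
  qed
  have "count C e0 \<noteq> 0"
    using count_e0_neq_0[OF set_C C(2)] eq by blast
  then have "count C e0 = 1"
    using le_1[of e0] by linarith
  then have "\<forall>x\<in>G0. count C x = count (mset_set G0) x"
    using eq by (simp add: ball_G0 count_mset_set' G0_def)
  then show "C = mset_set G0"
    by (intro multiset_eqI_on[OF set_C]) simp_all
qed

lemma atom_cases:
  assumes A: "is_atom G0 A"
  shows "A = mset_set G0 \<or> (\<exists>x\<in>G0. A = replicate_mset n x)"
proof (cases "\<exists>x\<in>G0. n \<le> count A x")
  case True
  then show ?thesis using atom_eq_replicate[OF A] by blast
next
  case False
  have set_A: "set_mset A \<subseteq> G0" "sum_mset A = 0" "A \<noteq> {#}"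
    using A by (auto simp: is_atom_def zss_def)
  have eq: "count A (v i) = count A e0" if "i < k" for i
  proof -
    have "count A (v i) < n" "count A e0 < n"
      using False that by (auto simp: ball_G0)
    moreover have "count A (v i) mod n = count A e0 mod n"
      using sum_mset_eq_0_iff_counts[OF set_A(1)] set_A(2) that by blast
    ultimately show ?thesis by simp
  qed
  have "count A e0 \<noteq> 0"
    using count_e0_neq_0[OF set_A(1,3)] eq by blast
  moreover have "\<forall>i<k. count A (v i) \<noteq> 0"
    using eq \<open>count A e0 \<noteq> 0\<close> by simp
  ultimately have "\<forall>x\<in>G0. count A x \<noteq> 0"
    using ball_G0[of "\<lambda>x. count A x \<noteq> 0"] by blast
  then have "mset_set G0 \<subseteq># A"
    by (intro mset_subset_eqI) (simp add: count_mset_set' Suc_le_eq)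
  then have "A = mset_set G0"
    using atom_eq_submset[OF A] is_atom_mset_set_G0 by (auto simp: is_atom_def zss_def)
  then show ?thesis ..
qed

lemma atom_weight:
  assumes "is_atom G0 A"
  defines "\<delta> \<equiv> int n - int k - 1"
  shows "int n * \<delta> dvd int (size A) + \<delta> * int (count A e0) - int n"
  using atom_cases[OF assms(1)]
proof
  assume "A = mset_set G0"
  then show ?thesis
    using card_G0 by (simp add: \<delta>_def G0_def)
next
  assume "\<exists>x\<in>G0. A = replicate_mset n x"
  then obtain x where "x \<in> G0" "A = replicate_mset n x" ..
  then show ?thesis
    by (cases "x = e0") (auto simp: G0_def v_ne_e0 mult.commute)
qed

lemma in_delta_star: "nat \<bar>int n - int k - 1\<bar> \<in> delta_star TYPE('a)"
proof (rule in_delta_starI)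
  show "repeat_G0 \<in> zss G0" "k + 1 \<in> lengths G0 repeat_G0"
    by (rule repeat_G0_zss, rule card_G0_in_lengths)
  show "n \<in> lengths G0 repeat_G0"
    unfolding lengths_def repeat_G0_def using is_atom_mset_set_G0
    by (intro CollectI exI[of _ "replicate_mset n (mset_set G0)"])
       (simp add: sum_mset_replicate_mset_eq_repeat_mset)
  show "int (nat \<bar>int n - int k - 1\<bar>) dvd int l - int l'"
    if "l \<in> lengths G0 B" "l' \<in> lengths G0 B" for B l l'
    using lengths_dvd_diff_of_atom_weights[OF _ atom_weight that] two_le_n by simp
qed (use n_ne_Suc_k in auto)

end

locale plus_sum_family = extended_family +
  assumes c_eq_1: "c = 1"
begin

lemma sum_mset_eq_0_iff_counts:
  "set_mset B \<subseteq> G0 \<Longrightarrow> sum_mset B = 0 \<longleftrightarrow> (\<forall>i<k. (count B (v i) + count B e0) mod n = 0)"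
  by (simp add: sum_mset_G0_eq_0_iff c_eq_1)

definition W :: "nat \<Rightarrow> 'a multiset" where
  "W j = replicate_mset j e0 + repeat_mset (n - j) (mset_set (v ` {..<k}))"

lemma count_W: "count (W j) x = (if x = e0 then j else 0) + (if x \<in> v ` {..<k} then n - j else 0)"
  by (simp add: W_def count_mset_set')

lemma count_W_e0: "count (W j) e0 = j"
  and count_W_v: "i < k \<Longrightarrow> count (W j) (v i) = n - j"
  using e0_notin v_ne_e0 by (auto simp: count_W)

lemma set_mset_W: "set_mset (W j) \<subseteq> G0"
proof
  fix x assume "x \<in># W j"
  then have "count (W j) x \<noteq> 0" by simp
  then show "x \<in> G0" unfolding count_W by (auto simp: G0_def split: if_splits)
qed

lemma size_W: "size (W j) = j + (n - j) * k"
  using inj_v by (simp add: W_def card_image)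

lemma is_atom_W:
  assumes j: "0 < j" "j < n"
  shows "is_atom G0 (W j)"
  unfolding is_atom_def
proof (intro conjI allI impI)
  show "W j \<in> zss G0"
    using set_mset_W j by (simp add: zss_def sum_mset_eq_0_iff_counts count_W_e0 count_W_v)
  show "W j \<noteq> {#}"
    using count_W_e0[of j] j by auto
  fix C assume C: "C \<subseteq># W j" "C \<noteq> {#}" "sum_mset C = 0"
  have set_C: "set_mset C \<subseteq> G0"
    using set_mset_mono[OF C(1)] set_mset_W by blast
  have le_e0: "count C e0 \<le> j"
    using mset_subset_eq_count[OF C(1), of e0] by (simp add: count_W_e0)
  have le_v: "count C (v i) \<le> n - j" if "i < k" for i
    using mset_subset_eq_count[OF C(1), of "v i"] that by (simp add: count_W_v)
  \<comment> \<open>each sum count C (v i) + count C e0 lies in [0, n] and is divisible by n\<close>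
  have sum_n: "count C (v i) + count C e0 = 0 \<or> count C (v i) + count C e0 = n" if "i < k" for i
  proof -
    have "(count C (v i) + count C e0) mod n = 0"
      using sum_mset_eq_0_iff_counts[OF set_C] C(3) that by blast
    moreover have "count C (v i) + count C e0 \<le> n"
      using le_e0 le_v[OF that] j by linarith
    ultimately show ?thesis
      by (cases "count C (v i) + count C e0 < n") auto
  qed
  have "count C e0 \<noteq> 0"
  proof
    assume "count C e0 = 0"
    then have "\<forall>i<k. count C (v i) = count C e0"
      using sum_n le_v j by fastforce
    then show False
      using count_e0_neq_0[OF set_C C(2)] \<open>count C e0 = 0\<close> by blast
  qed
  have sum_eq_n: "count C (v i) + count C e0 = n" if "i < k" for i
  proof -
    have "count C (v i) + count C e0 \<noteq> 0"
      using \<open>count C e0 \<noteq> 0\<close> by linarith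
    then show ?thesis using sum_n[OF that] by metis
  qed
  have "count C e0 = j"
    using sum_eq_n[OF k_pos] le_v[OF k_pos] le_e0 j by linarith
  moreover from this have "\<forall>i<k. count C (v i) = n - j"
    using sum_eq_n by fastforce
  ultimately have "\<forall>x\<in>G0. count C x = count (W j) x"
    using ball_G0[of "\<lambda>x. count C x = count (W j) x"] by (simp add: count_W_e0 count_W_v)
  then show "C = W j"
    by (intro multiset_eqI_on[OF set_C set_mset_W])
qed

lemma atom_cases:
  assumes A: "is_atom G0 A"
  shows "(\<exists>x\<in>G0. A = replicate_mset n x) \<or> (\<exists>j. 0 < j \<and> j < n \<and> A = W j)"
proof (cases "\<exists>x\<in>G0. n \<le> count A x")
  case True
  then show ?thesis using atom_eq_replicate[OF A] by blast
next
  case False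
  have set_A: "set_mset A \<subseteq> G0" "sum_mset A = 0" "A \<noteq> {#}"
    using A by (auto simp: is_atom_def zss_def)
  have less_n: "count A e0 < n" "\<And>i. i < k \<Longrightarrow> count A (v i) < n"
    using False by (auto simp: ball_G0)
  have md: "(count A (v i) + count A e0) mod n = 0" if "i < k" for i
    using sum_mset_eq_0_iff_counts[OF set_A(1)] set_A(2) that by blast
  have "count A e0 \<noteq> 0"
  proof
    assume "count A e0 = 0"
    then have "\<forall>i<k. count A (v i) = count A e0"
      using md less_n by simp
    then show False
      using count_e0_neq_0[OF set_A(1,3)] \<open>count A e0 = 0\<close> by blast
  qed
  have "count A (v i) = n - count A e0" if "i < k" for i
  proof -
    have "count A (v i) + count A e0 < 2 * n"
      using less_n(1) less_n(2)[OF that] by linarith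
    then have "count A (v i) + count A e0 = n"
    proof (cases "count A (v i) + count A e0 < n")
      case True
      then show ?thesis using md[OF that] \<open>count A e0 \<noteq> 0\<close> by simp
    next
      case False
      then have "(count A (v i) + count A e0) mod n = count A (v i) + count A e0 - n"
        using \<open>count A (v i) + count A e0 < 2 * n\<close> by (simp add: le_mod_geq)
      then show ?thesis using md[OF that] False by simp
    qed
    then show ?thesis by simp
  qed
  then have "\<forall>x\<in>G0. count A x = count (W (count A e0)) x"
    using ball_G0[of "\<lambda>x. count A x = count (W (count A e0)) x"] by (simp add: count_W_e0 count_W_v)
  then have "A = W (count A e0)"
    by (intro multiset_eqI_on[OF set_A(1) set_mset_W])
  then show ?thesis
    using \<open>count A e0 \<noteq> 0\<close> less_n(1) by blast
qed

lemma atom_weight: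
  assumes "is_atom G0 A"
  shows "int n * (int k - 1) dvd int (size A) + (int k - 1) * int (count A e0) - int n"
  using atom_cases[OF assms(1)]
proof
  assume "\<exists>x\<in>G0. A = replicate_mset n x"
  then obtain x where "x \<in> G0" "A = replicate_mset n x" ..
  then show ?thesis
    by (cases "x = e0") (auto simp: G0_def v_ne_e0 mult.commute)
next
  assume "\<exists>j. 0 < j \<and> j < n \<and> A = W j"
  then obtain j where "j < n" "A = W j" by blast
  moreover have "int (size (W j)) = int j + (int n - int j) * int k"
    using \<open>j < n\<close> by (simp add: size_W of_nat_diff)
  ultimately have "int (size A) + (int k - 1) * int (count A e0) - int n = int n * (int k - 1)"
    by (simp add: count_W_e0 algebra_simps)
  then show ?thesis by simp
qed

lemma one_less_k: "1 < k"
  using not_unit_vector c_eq_1 two_le_n by auto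

lemma two_in_lengths: "2 \<in> lengths G0 repeat_G0"
proof -
  have "W 1 + W (n - 1) = repeat_G0"
    using two_le_n e0_notin by (intro multiset_eqI) (auto simp: count_W count_repeat_G0 G0_def)
  then show ?thesis
    unfolding lengths_def using is_atom_W[of 1] is_atom_W[of "n - 1"] two_le_n
    by (intro CollectI exI[of _ "{#W 1, W (n - 1)#}"]) auto
qed

lemma in_delta_star: "k - 1 \<in> delta_star TYPE('a)"
proof (rule in_delta_starI)
  show "repeat_G0 \<in> zss G0" "k + 1 \<in> lengths G0 repeat_G0" "2 \<in> lengths G0 repeat_G0"
    by (rule repeat_G0_zss, rule card_G0_in_lengths, rule two_in_lengths)
  show "int (k - 1) dvd int l - int l'"
    if "l \<in> lengths G0 B" "l' \<in> lengths G0 B" for B l l'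
    using lengths_dvd_diff_of_atom_weights[OF _ atom_weight that] two_le_n k_pos
    by (simp add: of_nat_diff)
qed (use one_less_k in auto)

end

lemma minus_sum_familyI:
  assumes "indep_family v k n" "0 < k" "n \<noteq> k + 1"
  shows "minus_sum_family v k n (n - 1)"
proof -
  interpret indep_family v k n by fact
  show ?thesis
    using assms(2,3) two_le_n coprime_diff_one_left_nat[of n] by unfold_locales (auto simp: mod_if)
qed

lemma plus_sum_familyI:
  assumes "indep_family v k n" "2 \<le> k"
  shows "plus_sum_family v k n 1"
proof -
  interpret indep_family v k n by fact
  show ?thesis
    using assms(2) by unfold_locales auto
qed

lemma finite_delta_star: "finite (delta_star TYPE('a::{ab_group_add,finite}))"
proof -
  have "delta_star TYPE('a) \<subseteq> (\<lambda>G0::'a set. Inf (Delta G0)) ` UNIV"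
    unfolding delta_star_def by blast
  then show ?thesis
    by (rule finite_subset) simp
qed

lemma pred_in_delta_star_of_basis:
  fixes b :: "nat \<Rightarrow> 'a::ab_group_add"
  assumes chain: "dvd_chain ns" and ind: "indep b ns" and k: "2 \<le> k" "k \<le> length ns"
  shows "k - 1 \<in> delta_star TYPE('a)"
proof -
  have "ns ! i = ns ! 0 * (ns ! i div ns ! 0)" "0 < ns ! i div ns ! 0" if "i < k" for i
    using dvd_chain_nth_dvd[OF chain, of 0 i] dvd_chain_nth_pos[OF chain, of i] that k
    by (auto simp: div_greater_zero_iff dvd_imp_le)
  then have "indep (\<lambda>i. smul (ns ! i div ns ! 0) (b i)) (replicate k (ns ! 0))"
    using k(2) by (intro indep_scaled[OF ind]) auto
  moreover have "2 \<le> ns ! 0"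
    using dvd_chain_nth_gt_1[OF chain, of 0] k by (cases ns) auto
  ultimately have "plus_sum_family (\<lambda>i. smul (ns ! i div ns ! 0) (b i)) k (ns ! 0) 1"
    using k(1) by (intro plus_sum_familyI) (simp add: indep_family_def)
  then show ?thesis
    by (rule plus_sum_family.in_delta_star)
qed

lemma minus_2_in_delta_star_of_basis:
  fixes b :: "nat \<Rightarrow> 'a::ab_group_add"
  assumes chain: "dvd_chain ns" and ind: "indep b ns" and j: "j < length ns"
    and d: "3 \<le> d" "d dvd ns ! j"
  shows "d - 2 \<in> delta_star TYPE('a)"
proof -
  obtain q where q: "ns ! j = d * q"
    using d(2) ..
  have "0 < q"
    using q dvd_chain_nth_pos[OF chain j] by (simp add: gr0I)
  have "indep (\<lambda>_. smul q (b j)) (replicate 1 d)"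
    using indep_scaled[OF indep_nth[OF ind j], of 1 d "\<lambda>_. q"] q \<open>0 < q\<close> by simp
  then have "minus_sum_family (\<lambda>_. smul q (b j)) 1 d (d - 1)"
    using d(1) by (intro minus_sum_familyI) (simp_all add: indep_family_def)
  then have "nat \<bar>int d - int 1 - 1\<bar> \<in> delta_star TYPE('a)"
    by (rule minus_sum_family.in_delta_star)
  then show ?thesis
    using d(1) by (simp add: nat_diff_distrib)
qed

lemma homocyclic_in_delta_star:
  assumes "is_inv_decomp TYPE('a::ab_group_add) (replicate r n)" "2 \<le> n" "1 \<le> r" "n \<noteq> r + 1"
  shows "nat \<bar>int n - int r - 1\<bar> \<in> delta_star TYPE('a)"
proof -
  obtain b :: "nat \<Rightarrow> 'a" where "indep b (replicate r n)"
    using obtain_basis_of_inv_decomp[OF assms(1)] by metis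
  then have "minus_sum_family b r n (n - 1)"
    using assms(2-4) by (intro minus_sum_familyI) (simp_all add: indep_family_def)
  then show ?thesis
    by (rule minus_sum_family.in_delta_star)
qed

lemma spans_UNIV_Nil:
  fixes b :: "nat \<Rightarrow> 'a::ab_group_add"
  assumes "spans UNIV b []"
  shows "card (UNIV :: 'a set) = 1"
proof -
  have "(UNIV :: 'a set) = {0}"
    using assms by (auto simp: spans_def)
  then show ?thesis
    using card_1_singleton_iff[of "UNIV :: 'a set"] by auto
qed

lemma Max_ge_max_of_pos_mem:
  fixes a b :: nat
  assumes "finite S" "0 < a \<Longrightarrow> a \<in> S" "0 < b \<Longrightarrow> b \<in> S"
  shows "max a b \<le> Max S"
proof -
  have "x \<le> Max S" if "0 < x \<Longrightarrow> x \<in> S" for x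
    using Max_ge[OF assms(1)] that by (cases "x = 0") auto
  then show ?thesis
    using assms(2,3) by simp
qed

theorem lemma6p17:
  assumes "card (UNIV :: 'a::{ab_group_add, finite} set) \<ge> 3"
  shows "{1..group_rank TYPE('a) - 1} \<subseteq> delta_star TYPE('a)
    \<and> (\<forall>d. 3 \<le> d \<and> d dvd group_exp TYPE('a) \<longrightarrow> d - 2 \<in> delta_star TYPE('a))
    \<and> (\<forall>n r. 2 \<le> n \<and> 1 \<le> r \<and> n \<noteq> r + 1 \<and> is_inv_decomp TYPE('a) (replicate r n)
           \<longrightarrow> nat \<bar>int n - int r - 1\<bar> \<in> delta_star TYPE('a))
    \<and> Max (delta_star TYPE('a)) \<ge> max (group_rank TYPE('a) - 1) (group_exp TYPE('a) - 2)"
proof -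
  obtain ns where dec: "is_inv_decomp TYPE('a) ns"
    using exists_inv_decomp by blast
  then obtain b :: "nat \<Rightarrow> 'a" where basis: "dvd_chain ns" "indep b ns" "spans UNIV b ns"
    by (rule obtain_basis_of_inv_decomp)
  have "ns \<noteq> []"
    using spans_UNIV_Nil[of b] basis(3) assms by auto
  have rank: "{1..group_rank TYPE('a) - 1} \<subseteq> delta_star TYPE('a)"
    using pred_in_delta_star_of_basis[OF basis(1,2), of "Suc _"] group_rank_eq[OF dec]
    by (auto simp: Suc_le_eq)
  have exp: "d - 2 \<in> delta_star TYPE('a)" if "3 \<le> d" "d dvd group_exp TYPE('a)" for d
  proof (rule minus_2_in_delta_star_of_basis[OF basis(1,2) _ that(1)])
    show "length ns - 1 < length ns" "d dvd ns ! (length ns - 1)"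
      using that(2) group_exp_eq[OF basis \<open>ns \<noteq> []\<close>] \<open>ns \<noteq> []\<close> by (simp_all add: last_conv_nth)
  qed
  have "max (group_rank TYPE('a) - 1) (group_exp TYPE('a) - 2) \<le> Max (delta_star TYPE('a))"
    using finite_delta_star rank exp by (intro Max_ge_max_of_pos_mem) auto
  then show ?thesis
    using rank exp homocyclic_in_delta_star by blast
qed

end
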